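(* Let $(g_i)_{i\in\mathbb N}\subset\mathcal X$, $(r_i)\subset(0,\infty)$, $\mathbf B_i=\{(s,y)\in[0,T]\times\overline{\mathcal O}:|y-g_i(s)|<r_i\}$ and $A>0$. For a finite nonempty $I\subset\mathbb N$ define $$v^{I,A}(t,x)=\inf_{\alpha\in L^2(t,T;\mathbb R^m)}\ \inf_{\theta_I\in[t,T]^I}\Big\{\frac12\int_t^{\max_{i\in I}\theta_i}|\alpha_s|^2ds+\sum_{i\in I}A\mathbf 1_{\mathbf B_i}(\theta_i,Y^{t,x,\alpha}_{\theta_i})\Big\},$$ $\phi^{I,A}=A\mathbf 1_{\mathbf B_i}$ if $I=\{i\}$ and $\phi^{I,A}=\min_{i\in I}\{A\mathbf 1_{\mathbf B_i}+v^{I\setminus\{i\},A}\}$ if $I$ has at least two elements, and for bounded measurable $\phi$, $v[\phi](t,x)=\inf_{\alpha\in L^2(t,T)}\inf_{\theta\in[t,T]}\{\frac12\int_t^\theta|\alpha_s|^2ds+\phi(\theta,Y^{t,x,\alpha}_\theta)\}$. Then for all finite nonempty $I$ and $(t,x)\in[0,T]\times\overline{\mathcal O}$: (1) $v^{I,A}(t,x)=v[\phi^{I,A}](t,x)$; (2) $v^{I,A}(t,x)\ge A\wedge\Lambda_{t,x}(\mathcal G_I)$, where $\Lambda_{t,x}(\mathcal G_I)=\inf\{\frac12\int_t^T|\alpha_s|^2ds:\alpha\in L^2(t,T;\mathbb R^m),\ \sup_{s\in[t,T]}|Y^{t,x,\alpha}_s-g_i(s)|\ge r_i\ \forall i\in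 I\}$.
   Context: Standing assumptions: $\mathcal O\subset\mathbb R^d$ bounded open of class $W^{2,\infty}$ with outward normal $n$; $\gamma$ Lipschitz with $\gamma\cdot n\ge c_0>0$ on $\partial\mathcal O$; $b,\sigma$ continuous on $[0,T]\times\overline{\mathcal O}$ (values in $\mathbb R^d$, $\mathbb R^{d\times m}$), Lipschitz in space uniformly in time. $\mathcal X=C([0,T];\overline{\mathcal O})$. For $\alpha\in L^2(t,T;\mathbb R^m)$, $Y^{t,x,\alpha}$ is the unique continuous $Y:[t,T]\to\overline{\mathcal O}$ such that for a continuous bounded-variation $z$: $Y_s=x+\int_t^s(b(u,Y_u)-\sigma(u,Y_u)\alpha_u)du-z_s$, $z_s=\int_t^s1_{\partial\mathcal O}(Y_u)\gamma(Y_u)d|z|_u$. *)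

theory Defs
  imports "HOL-Analysis.Analysis"
begin

text \<open>Bounded open domain of class W^{2,infinity} (locally = C^{1,1}) with outward unit
  normal n: described by a defining function psi with Lipschitz gradient G,
  Dom = {psi < 0}, G nonvanishing on {psi = 0}, and n = G / |G| on the boundary.\<close>
definition W2inf_domain :: "(real^'d) set \<Rightarrow> (real^'d \<Rightarrow> real^'d) \<Rightarrow> bool" where
  "W2inf_domain Dom n \<longleftrightarrow> open Dom \<and> bounded Dom \<and>
     (\<exists>(psi :: real^'d \<Rightarrow> real) (G :: real^'d \<Rightarrow> real^'d) L.
        (\<forall>x. (psi has_derivative (\<lambda>h. G x \<bullet> h)) (at x)) \<and>
        L-lipschitz_on UNIV G \<and>
        Dom = {x. psi x < 0} \<and>
        (\<forall>x. psi x = 0 \<longrightarrow> G x \<noteq> 0) \<and>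
        (\<forall>x\<in>frontier Dom. n x = (1 / norm (G x)) *\<^sub>R G x))"

definition standing_assumptions ::
  "real \<Rightarrow> (real^'d) set \<Rightarrow> (real^'d \<Rightarrow> real^'d) \<Rightarrow> (real^'d \<Rightarrow> real^'d)
   \<Rightarrow> (real \<Rightarrow> real^'d \<Rightarrow> real^'d) \<Rightarrow> (real \<Rightarrow> real^'d \<Rightarrow> real^'m^'d) \<Rightarrow> bool" where
  "standing_assumptions T Dom n \<gamma> b \<sigma> \<longleftrightarrow>
     0 < T \<and> W2inf_domain Dom n \<and>
     (\<exists>L. L-lipschitz_on UNIV \<gamma>) \<and>
     (\<exists>c0>0. \<forall>x\<in>frontier Dom. \<gamma> x \<bullet> n x \<ge> c0) \<and>
     continuous_on ({0..T} \<times> closure Dom) (\<lambda>(t,x). b t x) \<and>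
     continuous_on ({0..T} \<times> closure Dom) (\<lambda>(t,x). \<sigma> t x) \<and>
     (\<exists>L. \<forall>t\<in>{0..T}. L-lipschitz_on (closure Dom) (b t)) \<and>
     (\<exists>L. \<forall>t\<in>{0..T}. L-lipschitz_on (closure Dom) (\<sigma> t))"

definition L2 :: "real \<Rightarrow> real \<Rightarrow> (real \<Rightarrow> real^'m) \<Rightarrow> bool" where
  "L2 t T \<alpha> \<longleftrightarrow> (\<lambda>s. indicator {t..T} s *\<^sub>R \<alpha> s) \<in> borel_measurable lebesgue \<and>
                 set_integrable lebesgue {t..T} (\<lambda>s. (norm (\<alpha> s))\<^sup>2)"

definition tvar :: "(real \<Rightarrow> 'a::real_normed_vector) \<Rightarrow> real \<Rightarrow> real \<Rightarrow> ereal" where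
  "tvar z a b = Sup {ereal (\<Sum>k<N. norm (z (p (Suc k)) - z (p k))) | p N.
                     p 0 = a \<and> p N = b \<and> (\<forall>k<N. p k \<le> p (Suc k))}"

definition bounded_variation_on :: "(real \<Rightarrow> 'a::real_normed_vector) \<Rightarrow> real \<Rightarrow> real \<Rightarrow> bool" where
  "bounded_variation_on z a b \<longleftrightarrow> tvar z a b < \<infinity>"

definition varfun :: "(real \<Rightarrow> 'a::real_normed_vector) \<Rightarrow> real \<Rightarrow> real \<Rightarrow> real" where
  "varfun z t s = (if s \<le> t then 0 else real_of_ereal (tvar z t s))"

text \<open>Y solves the reflected (Skorokhod) problem on [t,T] started at x with control alpha,
  with pushing term z; Y is extended by x outside [t,T] (normalisation).\<close>
definition skorokhod ::
  "real \<Rightarrow> (real^'d) set \<Rightarrow> (real^'d \<Rightarrow> real^'d)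
   \<Rightarrow> (real \<Rightarrow> real^'d \<Rightarrow> real^'d) \<Rightarrow> (real \<Rightarrow> real^'d \<Rightarrow> real^'m^'d)
   \<Rightarrow> real \<Rightarrow> real^'d \<Rightarrow> (real \<Rightarrow> real^'m) \<Rightarrow> (real \<Rightarrow> real^'d) \<Rightarrow> (real \<Rightarrow> real^'d) \<Rightarrow> bool" where
  "skorokhod T Dom \<gamma> b \<sigma> t x \<alpha> Y z \<longleftrightarrow>
     continuous_on {t..T} Y \<and> (\<forall>s\<in>{t..T}. Y s \<in> closure Dom) \<and> (\<forall>s. s \<notin> {t..T} \<longrightarrow> Y s = x) \<and>
     continuous_on {t..T} z \<and> bounded_variation_on z t T \<and>
     (\<forall>s\<in>{t..T}. Y s = x + (LINT u:{t..s}|lebesgue. b u (Y u) - \<sigma> u (Y u) *v \<alpha> u) - z s) \<and>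
     (\<forall>s\<in>{t..T}. z s = (LINT u:{t..s}|interval_measure (varfun z t).
                           indicator (frontier Dom) (Y u) *\<^sub>R \<gamma> (Y u)))"

definition reflected_solution_exists_unique where
  "reflected_solution_exists_unique T Dom \<gamma> b \<sigma> \<longleftrightarrow>
     (\<forall>t\<in>{0..T}. \<forall>x\<in>closure Dom. \<forall>\<alpha>. L2 t T \<alpha> \<longrightarrow>
        (\<exists>!Y. \<exists>z. skorokhod T Dom \<gamma> b \<sigma> t x \<alpha> Y z))"

definition Yflow where
  "Yflow T Dom \<gamma> b \<sigma> t x \<alpha> = (THE Y. \<exists>z. skorokhod T Dom \<gamma> b \<sigma> t x \<alpha> Y z)"

definition energy :: "(real \<Rightarrow> real^'m) \<Rightarrow> real \<Rightarrow> real \<Rightarrow> real" where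
  "energy \<alpha> t s = (1/2) * (LINT u:{t..s}|lebesgue. (norm (\<alpha> u))\<^sup>2)"

definition ball_set :: "real \<Rightarrow> (real^'d) set \<Rightarrow> (nat \<Rightarrow> real \<Rightarrow> real^'d) \<Rightarrow> (nat \<Rightarrow> real) \<Rightarrow> nat
   \<Rightarrow> (real \<times> (real^'d)) set" where
  "ball_set T Dom g r i = {(s,y). s \<in> {0..T} \<and> y \<in> closure Dom \<and> norm (y - g i s) < r i}"

definition vIA where
  "vIA T Dom \<gamma> b \<sigma> g r I A t x =
     Inf {energy \<alpha> t (Max (\<theta> ` I)) +
          (\<Sum>i\<in>I. A * indicator (ball_set T Dom g r i) (\<theta> i, Yflow T Dom \<gamma> b \<sigma> t x \<alpha> (\<theta> i))) | \<alpha> \<theta>.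
          L2 t T \<alpha> \<and> (\<forall>i\<in>I. \<theta> i \<in> {t..T})}"

definition phiIA where
  "phiIA T Dom \<gamma> b \<sigma> g r I A = (\<lambda>(s,y).
     if card I = 1 then A * indicator (ball_set T Dom g r (the_elem I)) (s,y)
     else Min ((\<lambda>i. A * indicator (ball_set T Dom g r i) (s,y) + vIA T Dom \<gamma> b \<sigma> g r (I - {i}) A s y) ` I))"

definition vphi where
  "vphi T Dom \<gamma> b \<sigma> (\<phi> :: (real \<times> (real^'d)) \<Rightarrow> real) t x =
     Inf {energy \<alpha> t \<theta> + \<phi> (\<theta>, Yflow T Dom \<gamma> b \<sigma> t x \<alpha> \<theta>) | \<alpha> \<theta>.
          L2 t T \<alpha> \<and> \<theta> \<in> {t..T}}"

text \<open>Lambda_{t,x}(G_I), with inf of the empty set = +infinity.\<close>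
definition Lambda where
  "Lambda T Dom \<gamma> b \<sigma> g r I t x =
     Inf {ereal (energy \<alpha> t T) | \<alpha>. L2 t T \<alpha> \<and>
          (\<forall>i\<in>I. Sup ((\<lambda>s. norm (Yflow T Dom \<gamma> b \<sigma> t x \<alpha> s - g i s)) ` {t..T}) \<ge> r i)}"

end

theory Submission
  imports Defs
begin

(* Both claims rest on the flow property of the reflected dynamics: running alpha on
   [t,theta] and beta afterwards yields Y^{t,x,alpha} up to theta and Y^{theta,y,beta},
   y = Y^{t,x,alpha}_theta, after theta.  It is proved by gluing two solutions of the
   Skorokhod problem and invoking uniqueness; the delicate point is that the variation
   measure of the glued pushing term restricts on [t,theta] and on ]theta,T] to the
   variation measures of the two pieces, which needs additivity of total variation
   and some facts on interval measures.
   With additivity of the energy, (1) is a dynamic programming principle at the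
   earliest of the times theta_i.  For (2), either some indicator in the cost equals A,
   or no ball is visited at its time and the control switched off after max theta_i
   is admissible for Lambda with the same energy.
   Sections: total variation; measure-theoretic tools; Skorokhod solutions and their
   concatenation; controls and energy; the flow; the value functions; the theorem. *)

section \<open>Total variation\<close>

lemma partition_bounds:
  fixes p :: "nat \<Rightarrow> real"
  assumes "p 0 = a" "p N = b" "\<forall>k<N. p k \<le> p (Suc k)" "k \<le> N"
  shows "a \<le> p k \<and> p k \<le> b"
proof
  have "a \<le> p k" if "k \<le> N" for k using that
  proof (induction k)
    case 0 then show ?case using assms by simp
  next
    case (Suc k) then show ?case using assms(3) by (meson Suc_le_lessD less_imp_le_nat order_trans)
  qed
  then show "a \<le> p k" using assms by simp
  have "p k \<le> b" if "k \<le> N" for k using that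
  proof (induction k rule: inc_induct)
    case base then show ?case using assms by simp
  next
    case (step k) then show ?case using assms(3) by (meson order_trans)
  qed
  then show "p k \<le> b" using assms by simp
qed

lemma tvar_ge_partition_sum:
  assumes "p 0 = a" "p N = b" "\<forall>k<N. p k \<le> p (Suc k)"
  shows "ereal (\<Sum>k<N. norm (z (p (Suc k)) - z (p k))) \<le> tvar z a b"
  unfolding tvar_def using assms by (intro Sup_upper) blast

lemma tvar_leI:
  assumes "\<And>p N. p 0 = a \<Longrightarrow> p N = b \<Longrightarrow> (\<forall>k<N. p k \<le> p (Suc k)) \<Longrightarrow>
              ereal (\<Sum>k<N. norm (z (p (Suc k)) - z (p k))) \<le> c"
  shows "tvar z a b \<le> c"
  unfolding tvar_def by (rule Sup_least) (use assms in blast)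

lemma tvar_nonneg: assumes "a \<le> b" shows "0 \<le> tvar z a b"
proof -
  have "ereal (\<Sum>k<1. norm (z ((\<lambda>k. if k = 0 then a else b) (Suc k)) - z ((\<lambda>k. if k = 0 then a else b) k))) \<le> tvar z a b"
    by (rule tvar_ge_partition_sum) (use assms in auto)
  then show ?thesis by (rule order_trans[rotated]) simp
qed

lemma tvar_cong:
  assumes "\<And>s. s \<in> {a..b} \<Longrightarrow> z s = z' s"
  shows "tvar z a b = tvar z' a b"
proof -
  have "(\<Sum>k<N. norm (z (p (Suc k)) - z (p k))) = (\<Sum>k<N. norm (z' (p (Suc k)) - z' (p k)))"
    if "p 0 = a" "p N = b" "\<forall>k<N. p k \<le> p (Suc k)" for p N
  proof (rule sum.cong)
    fix k assume "k \<in> {..<N}"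
    then have "Suc k \<le> N" "k \<le> N" by auto
    with partition_bounds[OF that] assms
    show "norm (z (p (Suc k)) - z (p k)) = norm (z' (p (Suc k)) - z' (p k))"
      by (metis atLeastAtMost_iff)
  qed simp
  then show ?thesis unfolding tvar_def by (intro arg_cong[where f=Sup] Collect_cong ex_cong1) fastforce
qed

lemma tvar_shift: "tvar (\<lambda>s. z s + c) a b = tvar z a b"
  unfolding tvar_def by simp

lemma tvar_const:
  assumes "\<And>s. s \<in> {a..b} \<Longrightarrow> z s = c" and "a \<le> b"
  shows "tvar z a b = 0"
proof -
  have "tvar z a b = tvar (\<lambda>_. c) a b" by (rule tvar_cong) (use assms in auto)
  also have "\<dots> \<le> 0" by (rule tvar_leI) simp
  finally show ?thesis using tvar_nonneg[of a b z] assms(2) by simp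
qed

lemma tvar_refl: "tvar z a a = 0"
  by (rule tvar_const[of a a z "z a"]) auto

lemma ereal_Sup_add_le:
  fixes S1 S2 :: "ereal set"
  assumes "S1 \<noteq> {}" "S2 \<noteq> {}" "\<forall>x\<in>S1. x \<noteq> -\<infinity>" "\<forall>y\<in>S2. y \<noteq> -\<infinity>"
    and le: "\<And>x y. x\<in>S1 \<Longrightarrow> y\<in>S2 \<Longrightarrow> x + y \<le> L"
  shows "Sup S1 + Sup S2 \<le> L"
proof -
  obtain y0 where y0: "y0 \<in> S2" using assms(2) by blast
  have "Sup S2 \<noteq> -\<infinity>"
    using Sup_upper[OF y0] assms(4) y0 by auto
  then have "Sup S1 + Sup S2 = (SUP x\<in>S1. x + Sup S2)"
    using SUP_ereal_add_left[of S1 "Sup S2" "\<lambda>x. x", OF assms(1)] by simp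
  also have "\<dots> \<le> L"
  proof (rule SUP_least)
    fix x assume x: "x \<in> S1"
    have "x + Sup S2 = (SUP y\<in>S2. x + y)"
      using SUP_ereal_add_right[of S2 x "\<lambda>y. y", OF assms(2)] x assms(3) by simp
    also have "\<dots> \<le> L" by (rule SUP_least) (use le x in auto)
    finally show "x + Sup S2 \<le> L" .
  qed
  finally show ?thesis .
qed

text \<open>Subadditivity: a partition of [a,c] splits at b into partitions of [a,b] and [b,c].\<close>
lemma tvar_subadditive:
  assumes ab: "a \<le> b" and bc: "b \<le> c"
  shows "tvar z a c \<le> tvar z a b + tvar z b c"
proof (rule tvar_leI)
  fix r N assume r0: "r 0 = a" and rN: "r N = c" and rm: "\<forall>k<N. r k \<le> r (Suc k)"
  define p where "p k = min (r k) b" for k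
  define q where "q k = max (r k) b" for k
  have "(\<Sum>k<N. norm (z (r (Suc k)) - z (r k))) \<le>
        (\<Sum>k<N. norm (z (p (Suc k)) - z (p k)) + norm (z (q (Suc k)) - z (q k)))"
  proof (rule sum_mono)
    fix k assume "k \<in> {..<N}"
    then have le: "r k \<le> r (Suc k)" using rm by auto
    consider "r (Suc k) \<le> b" | "r k \<le> b" "b < r (Suc k)" | "b < r k" by linarith
    then show "norm (z (r (Suc k)) - z (r k)) \<le> norm (z (p (Suc k)) - z (p k)) + norm (z (q (Suc k)) - z (q k))"
    proof cases
      case 2
      then have "p (Suc k) = b" "p k = r k" "q (Suc k) = r (Suc k)" "q k = b"
        by (auto simp: p_def q_def)
      then show ?thesis using norm_triangle_ineq[of "z b - z (r k)" "z (r (Suc k)) - z b"]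
        by (simp add: add.commute)
    qed (use le in \<open>auto simp: p_def q_def\<close>)
  qed
  also have "\<dots> = (\<Sum>k<N. norm (z (p (Suc k)) - z (p k))) + (\<Sum>k<N. norm (z (q (Suc k)) - z (q k)))"
    by (rule sum.distrib)
  finally have "ereal (\<Sum>k<N. norm (z (r (Suc k)) - z (r k))) \<le>
      ereal (\<Sum>k<N. norm (z (p (Suc k)) - z (p k))) + ereal (\<Sum>k<N. norm (z (q (Suc k)) - z (q k)))"
    by simp
  also have "\<dots> \<le> tvar z a b + tvar z b c"
  proof (rule add_mono)
    show "ereal (\<Sum>k<N. norm (z (p (Suc k)) - z (p k))) \<le> tvar z a b"
      by (rule tvar_ge_partition_sum) (use r0 rN rm ab bc in \<open>auto simp: p_def min_def\<close>)
    show "ereal (\<Sum>k<N. norm (z (q (Suc k)) - z (q k))) \<le> tvar z b c"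
      by (rule tvar_ge_partition_sum) (use r0 rN rm ab bc in \<open>auto simp: q_def max_def\<close>)
  qed
  finally show "ereal (\<Sum>k<N. norm (z (r (Suc k)) - z (r k))) \<le> tvar z a b + tvar z b c" .
qed

lemma partition_concat:
  assumes p: "p 0 = a" "p N = b" "\<forall>k<N. p k \<le> p (Suc k)"
    and q: "q 0 = b" "q M = c" "\<forall>k<M. q k \<le> q (Suc k)"
  defines "r \<equiv> \<lambda>k. if k \<le> N then p k else q (k - N)"
  shows "r 0 = a" "r (N + M) = c" "\<forall>k<N + M. r k \<le> r (Suc k)"
    and "(\<Sum>k<N + M. norm (z (r (Suc k)) - z (r k))) =
         (\<Sum>k<N. norm (z (p (Suc k)) - z (p k))) + (\<Sum>k<M. norm (z (q (Suc k)) - z (q k)))"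
proof -
  show "r 0 = a" using p by (simp add: r_def)
  show "r (N + M) = c" using p q by (auto simp: r_def)
  show "\<forall>k<N + M. r k \<le> r (Suc k)"
  proof safe
    fix k assume k: "k < N + M"
    consider "Suc k \<le> N" | "k = N" | "N < k" by linarith
    then show "r k \<le> r (Suc k)"
    proof cases
      case 1 then show ?thesis using p by (simp add: r_def)
    next
      case 2
      then have "q 0 \<le> q (Suc 0)" using q(3) k by auto
      then show ?thesis using p q k 2 by (simp add: r_def)
    next
      case 3
      then have "Suc k - N = Suc (k - N)" "k - N < M" using k by auto
      then show ?thesis using q 3 by (simp add: r_def)
    qed
  qed
  have "(\<Sum>k<N + M. norm (z (r (Suc k)) - z (r k))) =
        (\<Sum>k<N. norm (z (r (Suc k)) - z (r k))) + (\<Sum>k=N..<N + M. norm (z (r (Suc k)) - z (r k)))"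
    using sum.atLeastLessThan_concat[of 0 N "N+M" "\<lambda>k. norm (z (r (Suc k)) - z (r k))"]
    by (simp add: atLeast0LessThan)
  also have "(\<Sum>k<N. norm (z (r (Suc k)) - z (r k))) = (\<Sum>k<N. norm (z (p (Suc k)) - z (p k)))"
    by (rule sum.cong) (auto simp: r_def)
  also have "(\<Sum>k=N..<N + M. norm (z (r (Suc k)) - z (r k))) = (\<Sum>k=0..<M. norm (z (r (Suc (k + N))) - z (r (k + N))))"
    using sum.shift_bounds_nat_ivl[of "\<lambda>k. norm (z (r (Suc k)) - z (r k))" 0 N M] by (simp add: add.commute)
  also have "\<dots> = (\<Sum>k<M. norm (z (q (Suc k)) - z (q k)))"
    using p q by (intro sum.cong) (auto simp: r_def lessThan_atLeast0 Suc_diff_le)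
  finally show "(\<Sum>k<N + M. norm (z (r (Suc k)) - z (r k))) =
      (\<Sum>k<N. norm (z (p (Suc k)) - z (p k))) + (\<Sum>k<M. norm (z (q (Suc k)) - z (q k)))" .
qed

lemma tvar_superadditive:
  assumes ab: "a \<le> b" and bc: "b \<le> c"
  shows "tvar z a b + tvar z b c \<le> tvar z a c"
proof -
  let ?S = "\<lambda>a b. {ereal (\<Sum>k<N. norm (z (p (Suc k)) - z (p k))) | p N.
                     p 0 = a \<and> p N = b \<and> (\<forall>k<N. p k \<le> p (Suc k))}"
  have ne: "?S a b \<noteq> {}" if "a \<le> b" for a b
  proof -
    have "ereal (\<Sum>k<1. norm (z ((\<lambda>k. if k = 0 then a else b) (Suc k)) - z ((\<lambda>k. if k = 0 then a else b) k))) \<in> ?S a b"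
      using that by (intro CollectI exI[of _ "\<lambda>k. if k = 0 then a else b"] exI[of _ 1]) auto
    then show ?thesis by blast
  qed
  have "Sup (?S a b) + Sup (?S b c) \<le> tvar z a c"
  proof (rule ereal_Sup_add_le)
    show "?S a b \<noteq> {}" "?S b c \<noteq> {}" using ne ab bc by auto
    show "\<forall>x\<in>?S a b. x \<noteq> - \<infinity>" "\<forall>x\<in>?S b c. x \<noteq> - \<infinity>" by auto
    fix x y assume "x \<in> ?S a b" "y \<in> ?S b c"
    then obtain p N q M where p: "p 0 = a" "p N = b" "\<forall>k<N. p k \<le> p (Suc k)"
      and q: "q 0 = b" "q M = c" "\<forall>k<M. q k \<le> q (Suc k)"
      and xy: "x + y = ereal ((\<Sum>k<N. norm (z (p (Suc k)) - z (p k))) + (\<Sum>k<M. norm (z (q (Suc k)) - z (q k))))"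
      by auto
    show "x + y \<le> tvar z a c"
      unfolding xy partition_concat(4)[OF p q, where z=z, symmetric]
      by (rule tvar_ge_partition_sum[OF partition_concat(1-3)[OF p q]])
  qed
  then show ?thesis unfolding tvar_def .
qed

lemma tvar_add:
  assumes "a \<le> b" "b \<le> c"
  shows "tvar z a c = tvar z a b + tvar z b c"
  using tvar_subadditive[OF assms] tvar_superadditive[OF assms] by (rule antisym)

lemma tvar_mono_fin:
  assumes "a \<le> u" "u \<le> v" "v \<le> c" "tvar z a c < \<infinity>"
  shows "tvar z a u \<le> tvar z a v" "tvar z a v < \<infinity>" "tvar z a u < \<infinity>"
proof -
  have "tvar z a v = tvar z a u + tvar z u v" using assms by (intro tvar_add) auto
  moreover have "0 \<le> tvar z u v" using tvar_nonneg assms by auto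
  ultimately show "tvar z a u \<le> tvar z a v" by (simp add: add_increasing2)
  have "tvar z a c = tvar z a v + tvar z v c" using assms by (intro tvar_add) auto
  moreover have "0 \<le> tvar z v c" "0 \<le> tvar z a v" using tvar_nonneg[of v c z] tvar_nonneg[of a v z] assms by auto
  ultimately have "tvar z a v \<le> tvar z a c" by (simp add: add_increasing2)
  then show "tvar z a v < \<infinity>" using assms(4) by auto
  with \<open>tvar z a u \<le> tvar z a v\<close> show "tvar z a u < \<infinity>" by auto
qed

lemma varfun_le0: "s \<le> t \<Longrightarrow> varfun z t s = 0"
  by (simp add: varfun_def)

lemma varfun_ereal:
  assumes "t \<le> s" "s \<le> T" "bounded_variation_on z t T"
  shows "ereal (varfun z t s) = tvar z t s"
proof -
  have fin: "tvar z t s < \<infinity>" using tvar_mono_fin(3)[of t s T T z] assms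
    by (auto simp: bounded_variation_on_def)
  have "0 \<le> tvar z t s" using tvar_nonneg assms by auto
  then show ?thesis using fin assms(1)
    by (cases "s = t") (auto simp: varfun_def tvar_refl ereal_real)
qed

lemma varfun_mono:
  assumes "u \<le> v" "v \<le> T" "bounded_variation_on z t T"
  shows "varfun z t u \<le> varfun z t v"
proof (cases "u \<le> t")
  case True
  show ?thesis
  proof (cases "v \<le> t")
    case False
    then have "ereal (varfun z t v) = tvar z t v" using varfun_ereal[of t v T z] assms by auto
    moreover have "0 \<le> tvar z t v" using tvar_nonneg[of t v z] False by auto
    ultimately show ?thesis using True by (metis ereal_less_eq(5) varfun_le0)
  qed (use True in \<open>simp add: varfun_le0\<close>)
next
  case False
  have "ereal (varfun z t u) = tvar z t u" "ereal (varfun z t v) = tvar z t v"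
    using varfun_ereal[of t u T z] varfun_ereal[of t v T z] False assms by auto
  moreover have "tvar z t u \<le> tvar z t v"
    using tvar_mono_fin(1)[of t u v T z] False assms by (auto simp: bounded_variation_on_def)
  ultimately show ?thesis by (metis ereal_less_eq(3))
qed

text \<open>Either interval_measure F gives ]a,b] the mass F b - F a for all a \<le> b (the
  extension succeeded), or it is the zero measure (the degenerate default).  This lets
  us compute with the variation measure of a pushing term without knowing in advance
  that its variation function is right-continuous.\<close>
lemma interval_measure_cases:
  "(\<forall>a b. a \<le> b \<longrightarrow> emeasure (interval_measure F) {a<..b} = ennreal (F b - F a)) \<or>
   (\<forall>A. emeasure (interval_measure F) A = 0)"
proof (cases "\<exists>\<mu>'. (\<forall>i\<in>{(a, b). a \<le> b}. \<mu>' ((\<lambda>(a, b). {a<..b}) i) = (\<lambda>(a, b). ennreal (F b - F a)) i) \<and>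
          measure_space UNIV (sigma_sets UNIV ((\<lambda>(a, b). {a<..b::real}) ` {(a, b). a \<le> b})) \<mu>'")
  case True
  then obtain \<mu>' where eq: "\<forall>i\<in>{(a, b). a \<le> b}. \<mu>' ((\<lambda>(a, b). {a<..b}) i) = (\<lambda>(a, b). ennreal (F b - F a)) i"
    and ms: "measure_space UNIV (sigma_sets UNIV ((\<lambda>(a, b). {a<..b::real}) ` {(a, b). a \<le> b})) \<mu>'" by blast
  have "emeasure (interval_measure F) {a<..b} = ennreal (F b - F a)" if "a \<le> b" for a b
  proof -
    have "emeasure (interval_measure F) ((\<lambda>(a, b). {a<..b}) (a,b)) = (\<lambda>(a, b). ennreal (F b - F a)) (a,b)"
    proof (rule emeasure_extend_measure[OF interval_measure_def])
      show "\<And>i. i \<in> {(a, b). a \<le> b} \<Longrightarrow> \<mu>' ((\<lambda>(a, b). {a<..b}) i) = (\<lambda>(a, b). ennreal (F b - F a)) i"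
        using eq by blast
      show "(\<lambda>(a, b). {a<..b}) ` {(a, b). a \<le> b} \<subseteq> Pow UNIV" by auto
      have s: "sets (interval_measure F) = sigma_sets UNIV ((\<lambda>(a, b). {a<..b::real}) ` {(a, b). a \<le> b})"
        unfolding interval_measure_def by (rule sets_extend_measure) auto
      show "positive (sets (interval_measure F)) \<mu>'" "countably_additive (sets (interval_measure F)) \<mu>'"
        using ms unfolding s measure_space_def by auto
      show "(a, b) \<in> {(a, b). a \<le> b}" using that by simp
    qed
    then show ?thesis by simp
  qed
  then show ?thesis by blast
next
  case False
  then have M: "interval_measure F = measure_of UNIV ((\<lambda>(a, b). {a<..b::real}) ` {(a, b). a \<le> b}) (\<lambda>_. 0)"
    unfolding interval_measure_def extend_measure_def by auto
  have "emeasure (interval_measure F) A = 0" for A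
  proof (cases "A \<in> sets (interval_measure F)")
    case True
    show ?thesis
    proof (subst emeasure_measure_of[OF M])
      show "(\<lambda>(a, b). {a<..b::real}) ` {(a, b). a \<le> b} \<subseteq> Pow UNIV" by auto
      show "positive (sets (interval_measure F)) (\<lambda>_. 0)" by (simp add: positive_def)
      show "countably_additive (sets (interval_measure F)) (\<lambda>_. 0)" by (simp add: countably_additive_def)
    qed (use True in auto)
  next
    case False
    then show ?thesis by (rule emeasure_notin_sets)
  qed
  then show ?thesis by blast
qed

lemma null_set_integral:
  fixes f :: "_ \<Rightarrow> 'b::{banach, second_countable_topology}"
  assumes "emeasure M S = 0" "S \<in> sets M"
  shows "(LINT u:S|M. f u) = 0"
proof -
  have "AE u in M. u \<notin> S" using assms by (intro AE_I'[of S]) auto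
  then have "AE u in M. indicator S u *\<^sub>R f u = 0" by eventually_elim auto
  then show ?thesis unfolding set_lebesgue_integral_def by (simp add: integral_eq_zero_AE)
qed

lemma zero_measure_set_integral:
  fixes f :: "_ \<Rightarrow> 'b::{banach, second_countable_topology}"
  assumes "\<forall>A. emeasure M A = 0"
  shows "(LINT u:S|M. f u) = 0"
proof -
  have "AE u in M. False" using assms by (intro AE_I'[of "space M"]) auto
  then have "AE u in M. indicator S u *\<^sub>R f u = 0" by eventually_elim auto
  then show ?thesis unfolding set_lebesgue_integral_def by (simp add: integral_eq_zero_AE)
qed

lemma density_Ioc_eq:
  fixes M N :: "real measure"
  assumes sM: "sets M = sets borel" and sN: "sets N = sets borel"
   and eq: "\<And>a b. c \<le> a \<Longrightarrow> a \<le> b \<Longrightarrow> b \<le> d \<Longrightarrow> emeasure M {a<..b} = emeasure N {a<..b}"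
   and fin: "emeasure M {c<..d} \<noteq> \<infinity>"
  shows "density M (indicator {c<..d}) = density N (indicator {c<..d})"
proof (rule measure_eqI_generator_eq[where \<Omega>=UNIV and E="range (\<lambda>(a, b). {a<..b::real})"
      and A="\<lambda>i. {- real (i::nat)<..real i}"])
  have key: "{c<..d} \<inter> {a<..b} = {max a c<..min b d}" for a b :: real by auto
  fix X assume "X \<in> range (\<lambda>(a, b). {a<..b::real})"
  then obtain a b where X: "X = {a<..b}" by auto
  have "emeasure (density M (indicator {c<..d})) X = emeasure M {max a c<..min b d}"
    using emeasure_restricted[of "{c<..d}" M X] sM X key by simp
  also have "\<dots> = emeasure N {max a c<..min b d}"
    using eq[of "max a c" "min b d"] by (cases "max a c \<le> min b d") auto
  also have "\<dots> = emeasure (density N (indicator {c<..d})) X"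
    using emeasure_restricted[of "{c<..d}" N X] sN X key by simp
  finally show "emeasure (density M (indicator {c<..d})) X = emeasure (density N (indicator {c<..d})) X" .
next
  show "Int_stable (range (\<lambda>(a, b). {a<..b::real}))" by (auto simp: Int_stable_def)
  show "range (\<lambda>(a, b). {a<..b::real}) \<subseteq> Pow UNIV" by auto
  show "sets (density M (indicator {c<..d})) = sigma_sets UNIV (range (\<lambda>(a, b). {a<..b::real}))"
    using sM by (simp add: borel_sigma_sets_Ioc)
  show "sets (density N (indicator {c<..d})) = sigma_sets UNIV (range (\<lambda>(a, b). {a<..b::real}))"
    using sN by (simp add: borel_sigma_sets_Ioc)
  show "range (\<lambda>i. {- real (i::nat)<..real i}) \<subseteq> range (\<lambda>(a, b). {a<..b::real})" by auto
  show "(\<Union>i. {- real (i::nat)<..real i}) = UNIV"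
  proof -
    have "x \<in> (\<Union>i. {- real (i::nat)<..real i})" for x :: real
    proof -
      obtain n :: nat where "\<bar>x\<bar> < real n" using reals_Archimedean2 by blast
      then have "x \<in> {- real n<..real n}" by auto
      then show ?thesis by blast
    qed
    then show ?thesis by blast
  qed
  fix i :: nat
  have "emeasure (density M (indicator {c<..d})) {- real i<..real i} = emeasure M ({c<..d} \<inter> {- real i<..real i})"
    using emeasure_restricted[of "{c<..d}" M] sM by simp
  also have "\<dots> \<le> emeasure M {c<..d}" by (rule emeasure_mono) (use sM in auto)
  finally show "emeasure (density M (indicator {c<..d})) {- real i<..real i} \<noteq> \<infinity>"
    using fin by (auto simp: top_unique)
qed

lemma set_integral_density_eq:
  fixes M N :: "real measure" and f :: "real \<Rightarrow> 'b::{banach, second_countable_topology}"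
  assumes sM: "sets M = sets borel" and sN: "sets N = sets borel"
    and D: "density M (indicator {c<..d}) = density N (indicator {c<..d})"
    and S: "S \<in> sets borel" "S \<subseteq> {c<..d}"
    and f: "f \<in> borel_measurable borel"
  shows "(LINT u:S|M. f u) = (LINT u:S|N. f u)"
proof -
  have *: "(LINT u:S|K. f u) = integral\<^sup>L (density K (indicator {c<..d})) (\<lambda>u. indicator S u *\<^sub>R f u)"
    if sK: "sets K = sets borel" for K :: "real measure"
  proof -
    have m: "(\<lambda>u. indicator S u *\<^sub>R f u) \<in> borel_measurable K"
      using sK S f by (simp add: measurable_cong_sets[OF sK refl])
    have "integral\<^sup>L (density K (indicator {c<..d})) (\<lambda>u. indicator S u *\<^sub>R f u) =
          integral\<^sup>L K (\<lambda>u. indicator {c<..d} u *\<^sub>R (indicator S u *\<^sub>R f u))"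
      using integral_density[OF m, of "indicator {c<..d}"] sK
      by (simp add: ennreal_indicator measurable_cong_sets[OF sK refl])
    also have "\<dots> = (LINT u:S|K. f u)"
      unfolding set_lebesgue_integral_def using S
      by (intro Bochner_Integration.integral_cong) (auto split: split_indicator)
    finally show ?thesis by simp
  qed
  show ?thesis using *[OF sM] *[OF sN] D by simp
qed

lemma bounded_set_integrable:
  fixes f :: "real \<Rightarrow> 'b::{banach, second_countable_topology}"
  assumes sM: "sets M = sets borel" and A: "A \<in> sets borel" and fin: "emeasure M A < \<infinity>"
    and f: "f \<in> borel_measurable borel" and B: "\<And>u. u \<in> A \<Longrightarrow> norm (f u) \<le> B"
  shows "set_integrable M A f"
proof (rule set_integrable_bound)
  show "set_integrable M A (\<lambda>u. B)"
    unfolding set_integrable_def using sM A fin by (simp add: integrable_real_indicator)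
  show "set_borel_measurable M A f"
    unfolding set_borel_measurable_def measurable_cong_sets[OF sM refl]
    by (intro borel_measurable_scaleR borel_measurable_indicator f A)
  show "AE x in M. x \<in> A \<longrightarrow> norm (f x) \<le> norm B"
    using B by (intro AE_I2) (auto intro: order_trans[OF _ abs_ge_self])
qed

lemma set_integral_split_mid:
  fixes g :: "real \<Rightarrow> 'b::{banach, second_countable_topology}"
  assumes i1: "set_integrable lebesgue {a..m} g" and i2: "set_integrable lebesgue {m<..e} g"
    and "a \<le> m" "m \<le> e"
  shows "(LINT u:{a..e}|lebesgue. g u) = (LINT u:{a..m}|lebesgue. g u) + (LINT u:{m<..e}|lebesgue. g u)"
proof -
  have un: "{a..e} = {a..m} \<union> {m<..e}" using assms by auto
  show ?thesis unfolding un by (rule set_integral_Un[OF _ i1 i2]) auto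
qed

lemma set_integral_drop_left:
  fixes g :: "real \<Rightarrow> 'b::{banach, second_countable_topology}"
  assumes i: "set_integrable lebesgue {a..e} g" and ae: "a \<le> e"
  shows "(LINT u:{a..e}|lebesgue. g u) = (LINT u:{a<..e}|lebesgue. g u)"
proof -
  have "(LINT u:{a..e}|lebesgue. g u) = (LINT u:{a..a}|lebesgue. g u) + (LINT u:{a<..e}|lebesgue. g u)"
    by (rule set_integral_split_mid) (use ae in \<open>auto intro: set_integrable_subset[OF i]\<close>)
  moreover have "(LINT u:{a..a}|lebesgue. g u) = 0" by (rule null_set_integral) auto
  ultimately show ?thesis by simp
qed

lemma right_continuous_transfer:
  fixes F G :: "real \<Rightarrow> real"
  assumes G: "continuous (at_right s) G" and d: "s < d" and eq: "\<And>u. s \<le> u \<Longrightarrow> u < d \<Longrightarrow> F u = G u"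
  shows "continuous (at_right s) F"
proof -
  have Gs: "(G \<longlongrightarrow> G s) (at_right s)" using G by (simp add: continuous_within)
  have ev: "eventually (\<lambda>u. G u = F u) (at_right s)"
    unfolding eventually_at_right_field using d eq by (intro exI[of _ d]) auto
  have "(F \<longlongrightarrow> G s) (at_right s)" by (rule Lim_transform_eventually[OF Gs ev])
  moreover have "F s = G s" using eq d by simp
  ultimately show ?thesis by (simp add: continuous_within)
qed

section \<open>Solutions of the Skorokhod problem\<close>

text \<open>The variation measure of a pushing term z gives ]a,c] \<subseteq> ]-\<infinity>,T] the mass
  |z|_c - |z|_a.  In the degenerate case where interval_measure is zero, the
  Skorokhod equation forces z = 0 on [t,T], hence |z| = 0 there as well.\<close>
lemma skorokhod_variation_measure:
  assumes S: "skorokhod T Dom \<gamma> b \<sigma> t x \<alpha> Y z" and "a \<le> c" "c \<le> T"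
  shows "emeasure (interval_measure (varfun z t)) {a<..c} = ennreal (varfun z t c - varfun z t a)"
proof -
  note S' = S[unfolded skorokhod_def]
  from interval_measure_cases[of "varfun z t"] show ?thesis
  proof
    assume null: "\<forall>A. emeasure (interval_measure (varfun z t)) A = 0"
    have z0: "z s = 0" if "s \<in> {t..T}" for s
      using S' that zero_measure_set_integral[OF null] by auto
    have F0: "varfun z t s = 0" if "s \<le> T" for s
    proof (cases "s \<le> t")
      case False
      then have "tvar z t s = 0" using z0 that by (intro tvar_const[of t s z 0]) auto
      then show ?thesis using False by (simp add: varfun_def)
    qed (simp add: varfun_def)
    show ?thesis using null F0 assms by auto
  qed (use assms in blast)
qed

text \<open>If a measure gives ]a,c] the mass F c - F a (for c \<le> T), then by continuity
  from above the masses of ]s, s + 1/(n+1)] tend to zero.\<close>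
lemma interval_measure_right_limit:
  fixes F :: "real \<Rightarrow> real"
  assumes meas: "\<And>a c. a \<le> c \<Longrightarrow> c \<le> T \<Longrightarrow> emeasure (interval_measure F) {a<..c} = ennreal (F c - F a)"
    and s: "s < T"
  shows "(\<lambda>n. ennreal (F (min (s + 1 / Suc n) T) - F s)) \<longlonglongrightarrow> 0"
proof -
  define A where "A n = {s<..min (s + 1 / Suc n) T}" for n :: nat
  have "(\<lambda>n. emeasure (interval_measure F) (A n)) \<longlonglongrightarrow> emeasure (interval_measure F) (\<Inter>n. A n)"
  proof (rule Lim_emeasure_decseq)
    show "range A \<subseteq> sets (interval_measure F)" by (auto simp: A_def)
    show "decseq A"
    proof (rule decseq_SucI)
      fix n
      have "1 / real (Suc (Suc n)) \<le> 1 / real (Suc n)" by (simp add: frac_le)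
      then show "A (Suc n) \<subseteq> A n" unfolding A_def by auto
    qed
    fix n show "emeasure (interval_measure F) (A n) \<noteq> \<infinity>"
      unfolding A_def using s by (subst meas) auto
  qed
  moreover have "(\<Inter>n. A n) = {}"
  proof safe
    fix u assume "u \<in> (\<Inter>n. A n)"
    then have u: "s < u" "\<And>n. u \<le> s + 1 / Suc n" by (auto simp: A_def)
    obtain n where "inverse (real (Suc n)) < u - s" using reals_Archimedean[of "u - s"] u(1) by auto
    with u(2)[of n] show "u \<in> {}" by (simp add: inverse_eq_divide)
  qed
  ultimately show ?thesis unfolding A_def using s by (subst (asm) meas) auto
qed

lemma mono_right_continuous_from_limit:
  fixes F :: "real \<Rightarrow> real"
  assumes mono: "\<And>u v. u \<le> v \<Longrightarrow> v \<le> T \<Longrightarrow> F u \<le> F v" and s: "s < T"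
    and lim: "(\<lambda>n. ennreal (F (min (s + 1 / Suc n) T) - F s)) \<longlonglongrightarrow> 0"
  shows "continuous (at_right s) F"
  unfolding continuous_within tendsto_iff
proof (intro allI impI)
  fix e :: real assume e: "0 < e"
  from lim have "eventually (\<lambda>n. ennreal (F (min (s + 1 / Suc n) T) - F s) < ennreal e) sequentially"
    using e by (intro order_tendstoD) auto
  then obtain n where n: "ennreal (F (min (s + 1 / Suc n) T) - F s) < ennreal e"
    by (auto simp: eventually_sequentially)
  define d where "d = min (s + 1 / Suc n) T"
  have Fd: "F d - F s < e" using n e unfolding d_def[symmetric]
    by (cases "0 \<le> F d - F s") (auto simp: ennreal_less_iff)
  show "\<forall>\<^sub>F u in at_right s. dist (F u) (F s) < e"
    unfolding eventually_at_right_field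
  proof (intro exI[of _ d] conjI allI impI)
    show "s < d" using s by (simp add: d_def)
    fix u assume su: "s < u" "u < d"
    have "F s \<le> F u" "F u \<le> F d" using mono[of s u] mono[of u d] su by (auto simp: d_def)
    then show "dist (F u) (F s) < e" using Fd by (simp add: dist_real_def)
  qed
qed

lemma skorokhod_varfun_right_continuous:
  assumes S: "skorokhod T Dom \<gamma> b \<sigma> t x \<alpha> Y z" and s: "s < T"
  shows "continuous (at_right s) (varfun z t)"
proof (rule mono_right_continuous_from_limit[OF _ s interval_measure_right_limit[OF _ s]])
  have "bounded_variation_on z t T" using S unfolding skorokhod_def by blast
  then show "\<And>u v. u \<le> v \<Longrightarrow> v \<le> T \<Longrightarrow> varfun z t u \<le> varfun z t v" using varfun_mono by blast
  show "\<And>a c. a \<le> c \<Longrightarrow> c \<le> T \<Longrightarrow>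
      emeasure (interval_measure (varfun z t)) {a<..c} = ennreal (varfun z t c - varfun z t a)"
    by (rule skorokhod_variation_measure[OF S])
qed

lemma path_measurable:
  fixes Y :: "real \<Rightarrow> 'a::{real_normed_vector, second_countable_topology}"
  assumes c: "continuous_on {t..T} Y" and o: "\<forall>s. s \<notin> {t..T} \<longrightarrow> Y s = x"
  shows "Y \<in> borel_measurable borel"
proof -
  have "Y = (\<lambda>s. indicator {t..T} s *\<^sub>R Y s + indicator (- {t..T}) s *\<^sub>R x)"
    using o by (auto simp: fun_eq_iff split: split_indicator)
  also have "\<dots> \<in> borel_measurable borel"
  proof (rule borel_measurable_add)
    show "(\<lambda>s. indicator {t..T} s *\<^sub>R Y s) \<in> borel_measurable borel"
      by (rule borel_measurable_continuous_on_indicator[OF _ c]) simp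
    show "(\<lambda>s. indicator (- {t..T}) s *\<^sub>R x) \<in> borel_measurable borel"
      by (intro borel_measurable_scaleR borel_measurable_indicator borel_measurable_const) auto
  qed
  finally show ?thesis .
qed

lemma reflection_integrand_measurable:
  fixes Y :: "real \<Rightarrow> real^'d" and \<gamma> :: "real^'d \<Rightarrow> real^'d"
  assumes Y: "Y \<in> borel_measurable borel" and g: "continuous_on UNIV \<gamma>"
  shows "(\<lambda>u. indicator (frontier Dom) (Y u) *\<^sub>R \<gamma> (Y u)) \<in> borel_measurable borel"
proof (rule borel_measurable_scaleR)
  show "(\<lambda>u. indicat_real (frontier Dom) (Y u)) \<in> borel_measurable borel"
    using measurable_compose[OF Y borel_measurable_indicator[of "frontier Dom" borel]] by simp
  show "(\<lambda>u. \<gamma> (Y u)) \<in> borel_measurable borel"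
    using measurable_compose[OF Y borel_measurable_continuous_onI[OF g]] by simp
qed

text \<open>Square integrable controls are integrable on subintervals, since |a| \<le> 1 + |a|^2.\<close>
lemma L2_set_integrable:
  assumes "L2 t T \<kappa>" "t \<le> a" "e \<le> T"
  shows "set_integrable lebesgue {a..e} \<kappa>"
proof -
  have m: "(\<lambda>s. indicator {t..T} s *\<^sub>R \<kappa> s) \<in> borel_measurable lebesgue"
    and i: "set_integrable lebesgue {t..T} (\<lambda>s. (norm (\<kappa> s))\<^sup>2)" using assms unfolding L2_def by auto
  have sub: "{a..e} \<subseteq> {t..T}" using assms by auto
  have i2: "set_integrable lebesgue {a..e} (\<lambda>s. (norm (\<kappa> s))\<^sup>2)"
    by (rule set_integrable_subset[OF i]) (use sub in auto)
  have i1: "set_integrable lebesgue {a..e} (\<lambda>s. 1::real)"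
    by (rule absolutely_integrable_continuous_real) simp
  have i3: "set_integrable lebesgue {a..e} (\<lambda>s. 1 + (norm (\<kappa> s))\<^sup>2)"
    using i1 i2 by (rule set_integral_add)
  show ?thesis
  proof (rule set_integrable_bound[OF i3])
    have "(\<lambda>s. indicator {a..e} s *\<^sub>R \<kappa> s) = (\<lambda>s. indicator {a..e} s *\<^sub>R (indicator {t..T} s *\<^sub>R \<kappa> s))"
      using sub by (auto simp: fun_eq_iff split: split_indicator)
    also have "\<dots> \<in> borel_measurable lebesgue"
      by (rule borel_measurable_scaleR[OF borel_measurable_indicator m]) simp
    finally show "set_borel_measurable lebesgue {a..e} \<kappa>" unfolding set_borel_measurable_def .
    show "AE x in lebesgue. x \<in> {a..e} \<longrightarrow> norm (\<kappa> x) \<le> norm (1 + (norm (\<kappa> x))\<^sup>2)"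
    proof (rule AE_I2, intro impI)
      fix x
      have "0 \<le> (norm (\<kappa> x) - 1)\<^sup>2" by simp
      then have "norm (\<kappa> x) \<le> 1 + (norm (\<kappa> x))\<^sup>2"
      proof -
        have "2 * norm (\<kappa> x) \<le> (norm (\<kappa> x))\<^sup>2 + 1" using \<open>0 \<le> _\<close> by (simp add: power2_diff)
        then show ?thesis using norm_ge_zero[of "\<kappa> x"] by linarith
      qed
      then show "norm (\<kappa> x) \<le> norm (1 + (norm (\<kappa> x))\<^sup>2)" by simp
    qed
  qed
qed

lemma matrix_vector_norm_bound:
  fixes A :: "real^'m^'d"
  assumes "norm A \<le> K"
  shows "norm (A *v v) \<le> (real CARD('d) * real CARD('m) * K) * norm v"
proof -
  have "\<bar>A $ i $ j\<bar> \<le> K" for i j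
  proof -
    have "\<bar>A $ i $ j\<bar> \<le> norm (A $ i)" by (rule component_le_norm_cart)
    also have "\<dots> \<le> norm A" by (rule Finite_Cartesian_Product.norm_nth_le)
    finally show ?thesis using assms by linarith
  qed
  then have "onorm ((*v) A) \<le> real CARD('d) * real CARD('m) * K"
    by (rule onorm_le_matrix_component)
  moreover have "norm (A *v v) \<le> onorm ((*v) A) * norm v"
    by (rule onorm[OF matrix_vector_mul_bounded_linear])
  ultimately show ?thesis by (meson mult_right_mono norm_ge_zero order_trans)
qed

text \<open>A continuous matrix function times an integrable control is integrable:
  the matrix is bounded on the compact interval.\<close>
lemma continuous_matrix_vector_integrable:
  fixes Mt :: "real \<Rightarrow> real^'m^'d"
  assumes cM: "continuous_on {a..e} Mt" and \<kappa>: "set_integrable lebesgue {a..e} \<kappa>"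
  shows "set_integrable lebesgue {a..e} (\<lambda>u. Mt u *v \<kappa> u)"
proof -
  obtain K where K: "\<forall>u\<in>{a..e}. norm (Mt u) \<le> K"
    using compact_imp_bounded[OF compact_continuous_image[OF cM compact_Icc]]
    unfolding bounded_iff by auto
  define C where "C = real CARD('d) * real CARD('m) * K"
  have mS: "set_borel_measurable lebesgue {a..e} (\<lambda>u. Mt u *v \<kappa> u)"
  proof -
    have m1: "(\<lambda>u. indicator {a..e} u *\<^sub>R Mt u) \<in> borel_measurable lebesgue"
      using absolutely_integrable_continuous_real[OF cM] unfolding set_integrable_def
      by (rule borel_measurable_integrable)
    have m2: "(\<lambda>u. indicator {a..e} u *\<^sub>R \<kappa> u) \<in> borel_measurable lebesgue"
      using \<kappa> unfolding set_integrable_def by (rule borel_measurable_integrable)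
    have cont: "continuous_on UNIV (\<lambda>p::((real^'m^'d) \<times> (real^'m)). fst p *v snd p)"
      unfolding matrix_vector_mult_def by (intro continuous_intros)
    have "(\<lambda>u. (indicator {a..e} u *\<^sub>R Mt u) *v (indicator {a..e} u *\<^sub>R \<kappa> u)) \<in> borel_measurable lebesgue"
      by (rule borel_measurable_continuous_Pair[OF m1 m2 cont])
    moreover have "(\<lambda>u. (indicator {a..e} u *\<^sub>R Mt u) *v (indicator {a..e} u *\<^sub>R \<kappa> u)) =
        (\<lambda>u. indicator {a..e} u *\<^sub>R (Mt u *v \<kappa> u))"
      by (auto simp: fun_eq_iff split: split_indicator)
    ultimately show ?thesis unfolding set_borel_measurable_def by simp
  qed
  show ?thesis
  proof (rule set_integrable_bound[OF _ mS])
    show "set_integrable lebesgue {a..e} (\<lambda>u. \<bar>C\<bar> *\<^sub>R \<kappa> u)"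
      using \<kappa> by (rule set_integrable_scaleR_right)
    show "AE x in lebesgue. x \<in> {a..e} \<longrightarrow> norm (Mt x *v \<kappa> x) \<le> norm (\<bar>C\<bar> *\<^sub>R \<kappa> x)"
    proof (rule AE_I2, intro impI)
      fix x assume "x \<in> {a..e}"
      then have "norm (Mt x *v \<kappa> x) \<le> C * norm (\<kappa> x)"
        using matrix_vector_norm_bound K unfolding C_def by blast
      also have "\<dots> \<le> norm (\<bar>C\<bar> *\<^sub>R \<kappa> x)" by (simp add: mult_right_mono)
      finally show "norm (Mt x *v \<kappa> x) \<le> norm (\<bar>C\<bar> *\<^sub>R \<kappa> x)" .
    qed
  qed
qed

lemma drift_integrable:
  fixes b :: "real \<Rightarrow> real^'d \<Rightarrow> real^'d" and \<sigma> :: "real \<Rightarrow> real^'d \<Rightarrow> real^'m^'d"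
  assumes cb: "continuous_on ({0..T} \<times> D) (\<lambda>(t,x). b t x)"
    and cs: "continuous_on ({0..T} \<times> D) (\<lambda>(t,x). \<sigma> t x)"
    and ae: "0 \<le> a" "e \<le> T" and cY: "continuous_on {a..e} Y" and YD: "\<forall>u\<in>{a..e}. Y u \<in> D"
    and \<kappa>: "set_integrable lebesgue {a..e} \<kappa>"
  shows "set_integrable lebesgue {a..e} (\<lambda>u. b u (Y u) - \<sigma> u (Y u) *v \<kappa> u)"
proof -
  have cp: "continuous_on {a..e} (\<lambda>u. (u, Y u))" by (intro continuous_intros cY)
  have img: "(\<lambda>u. (u, Y u)) ` {a..e} \<subseteq> {0..T} \<times> D" using ae YD by auto
  have "continuous_on {a..e} (\<lambda>u. b u (Y u))" using continuous_on_compose2[OF cb cp img] by simp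
  then have "set_integrable lebesgue {a..e} (\<lambda>u. b u (Y u))"
    by (rule absolutely_integrable_continuous_real)
  moreover have "continuous_on {a..e} (\<lambda>u. \<sigma> u (Y u))" using continuous_on_compose2[OF cs cp img] by simp
  then have "set_integrable lebesgue {a..e} (\<lambda>u. \<sigma> u (Y u) *v \<kappa> u)"
    using \<kappa> by (rule continuous_matrix_vector_integrable)
  ultimately show ?thesis by (rule set_integral_diff(1))
qed

section \<open>Concatenation of Skorokhod solutions\<close>

definition concat_at :: "real \<Rightarrow> (real \<Rightarrow> 'a) \<Rightarrow> (real \<Rightarrow> 'a) \<Rightarrow> real \<Rightarrow> 'a" where
  "concat_at \<theta> \<alpha> \<beta> = (\<lambda>s. if s \<le> \<theta> then \<alpha> s else \<beta> s)"

lemma concat_at_same [simp]: "concat_at \<theta> \<alpha> \<alpha> = \<alpha>"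
  by (auto simp: concat_at_def fun_eq_iff)

definition glue_path :: "real \<Rightarrow> real \<Rightarrow> real \<Rightarrow> 'a \<Rightarrow> (real \<Rightarrow> 'a) \<Rightarrow> (real \<Rightarrow> 'a) \<Rightarrow> real \<Rightarrow> 'a" where
  "glue_path t \<theta> T x Y1 Y2 = (\<lambda>s. if s \<in> {t..\<theta>} then Y1 s else if s \<in> {\<theta>..T} then Y2 s else x)"

definition glue_push :: "real \<Rightarrow> real \<Rightarrow> (real \<Rightarrow> 'a::plus) \<Rightarrow> (real \<Rightarrow> 'a) \<Rightarrow> real \<Rightarrow> 'a" where
  "glue_push \<theta> T z1 z2 = (\<lambda>s. if s \<le> \<theta> then z1 s else if s \<le> T then z1 \<theta> + z2 s else z1 \<theta> + z2 T)"

locale skorokhod_concatenation =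
  fixes T :: real and Dom :: "(real^'d) set" and n \<gamma> :: "real^'d \<Rightarrow> real^'d"
    and b :: "real \<Rightarrow> real^'d \<Rightarrow> real^'d" and \<sigma> :: "real \<Rightarrow> real^'d \<Rightarrow> real^'m^'d"
    and t \<theta> :: real and x :: "real^'d" and \<alpha> \<beta> :: "real \<Rightarrow> real^'m"
    and Y1 z1 Y2 z2 :: "real \<Rightarrow> real^'d"
  assumes std: "standing_assumptions T Dom n \<gamma> b \<sigma>"
    and t0: "0 \<le> t" and t\<theta>: "t \<le> \<theta>" and \<theta>T: "\<theta> \<le> T"
    and S1: "skorokhod T Dom \<gamma> b \<sigma> t x \<alpha> Y1 z1" and L1: "L2 t T \<alpha>"
    and S2: "skorokhod T Dom \<gamma> b \<sigma> \<theta> (Y1 \<theta>) \<beta> Y2 z2" and L2b: "L2 \<theta> T \<beta>"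
begin

abbreviation "Yg \<equiv> glue_path t \<theta> T x Y1 Y2"
abbreviation "zg \<equiv> glue_push \<theta> T z1 z2"
abbreviation "Fg \<equiv> varfun zg t"
abbreviation "mu \<equiv> interval_measure Fg"
abbreviation "mu1 \<equiv> interval_measure (varfun z1 t)"
abbreviation "mu2 \<equiv> interval_measure (varfun z2 \<theta>)"
abbreviation "h \<equiv> (\<lambda>u. indicator (frontier Dom) (Yg u) *\<^sub>R \<gamma> (Yg u))"
abbreviation "h1 \<equiv> (\<lambda>u. indicator (frontier Dom) (Y1 u) *\<^sub>R \<gamma> (Y1 u))"
abbreviation "h2 \<equiv> (\<lambda>u. indicator (frontier Dom) (Y2 u) *\<^sub>R \<gamma> (Y2 u))"
abbreviation "drift1 \<equiv> (\<lambda>u. b u (Y1 u) - \<sigma> u (Y1 u) *v \<alpha> u)"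
abbreviation "drift2 \<equiv> (\<lambda>u. b u (Y2 u) - \<sigma> u (Y2 u) *v \<beta> u)"
abbreviation "drift \<equiv> (\<lambda>u. b u (Yg u) - \<sigma> u (Yg u) *v concat_at \<theta> \<alpha> \<beta> u)"

lemma first_solution:
  "continuous_on {t..T} Y1" "\<forall>s\<in>{t..T}. Y1 s \<in> closure Dom" "\<forall>s. s \<notin> {t..T} \<longrightarrow> Y1 s = x"
  "continuous_on {t..T} z1" "bounded_variation_on z1 t T"
  "\<forall>s\<in>{t..T}. Y1 s = x + (LINT u:{t..s}|lebesgue. drift1 u) - z1 s"
  "\<forall>s\<in>{t..T}. z1 s = (LINT u:{t..s}|mu1. h1 u)"
  using S1 unfolding skorokhod_def by auto

lemma second_solution:
  "continuous_on {\<theta>..T} Y2" "\<forall>s\<in>{\<theta>..T}. Y2 s \<in> closure Dom" "\<forall>s. s \<notin> {\<theta>..T} \<longrightarrow> Y2 s = Y1 \<theta>"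
  "continuous_on {\<theta>..T} z2" "bounded_variation_on z2 \<theta> T"
  "\<forall>s\<in>{\<theta>..T}. Y2 s = Y1 \<theta> + (LINT u:{\<theta>..s}|lebesgue. drift2 u) - z2 s"
  "\<forall>s\<in>{\<theta>..T}. z2 s = (LINT u:{\<theta>..s}|mu2. h2 u)"
  using S2 unfolding skorokhod_def by auto

lemma data_regularity:
  "continuous_on ({0..T} \<times> closure Dom) (\<lambda>(t,x). b t x)"
  "continuous_on ({0..T} \<times> closure Dom) (\<lambda>(t,x). \<sigma> t x)"
  "continuous_on UNIV \<gamma>" "compact (closure Dom)"
proof -
  show "continuous_on ({0..T} \<times> closure Dom) (\<lambda>(t,x). b t x)"
    "continuous_on ({0..T} \<times> closure Dom) (\<lambda>(t,x). \<sigma> t x)"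
    using std unfolding standing_assumptions_def by auto
  obtain L where "L-lipschitz_on UNIV \<gamma>" using std unfolding standing_assumptions_def by auto
  then show "continuous_on UNIV \<gamma>" by (rule lipschitz_on_continuous_on)
  have "bounded Dom" using std unfolding standing_assumptions_def W2inf_domain_def by auto
  then show "compact (closure Dom)" by (simp add: compact_closure)
qed

lemma second_measure_start_null: "emeasure mu2 {\<theta>} = 0"
proof -
  have "emeasure mu2 {\<theta>} \<le> emeasure mu2 {\<theta>-1<..\<theta>}" by (rule emeasure_mono) auto
  also have "\<dots> = ennreal (varfun z2 \<theta> \<theta> - varfun z2 \<theta> (\<theta>-1))"
    using skorokhod_variation_measure[OF S2, of "\<theta> - 1" \<theta>] \<theta>T by simp
  also have "\<dots> = 0" by (simp add: varfun_le0)
  finally show ?thesis by simp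
qed

lemma second_push_start: "z2 \<theta> = 0"
proof -
  have "z2 \<theta> = (LINT u:{\<theta>..\<theta>}|mu2. h2 u)" using second_solution(7) \<theta>T by auto
  also have "\<dots> = 0" using second_measure_start_null by (intro null_set_integral) auto
  finally show ?thesis .
qed

lemma second_path_start: "Y2 \<theta> = Y1 \<theta>"
proof -
  have "Y2 \<theta> = Y1 \<theta> + (LINT u:{\<theta>..\<theta>}|lebesgue. drift2 u) - z2 \<theta>"
    using second_solution(6) \<theta>T by auto
  moreover have "(LINT u:{\<theta>..\<theta>}|lebesgue. drift2 u) = 0" by (intro null_set_integral) auto
  ultimately show ?thesis using second_push_start by simp
qed

lemma glued_path_continuous: "continuous_on {t..T} Yg"
proof -
  have "continuous_on ({t..\<theta>} \<union> {\<theta>..T}) Yg"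
  proof (rule continuous_on_closed_Un)
    have "continuous_on {t..\<theta>} Y1" using continuous_on_subset[OF first_solution(1)] \<theta>T by auto
    then show "continuous_on {t..\<theta>} Yg" by (rule continuous_on_eq) (auto simp: glue_path_def)
    show "continuous_on {\<theta>..T} Yg"
      using second_solution(1) by (rule continuous_on_eq) (use t\<theta> second_path_start in \<open>auto simp: glue_path_def\<close>)
  qed auto
  moreover have "{t..\<theta>} \<union> {\<theta>..T} = {t..T}" using t\<theta> \<theta>T by auto
  ultimately show ?thesis by simp
qed

lemma glued_push_continuous: "continuous_on {t..T} zg"
proof -
  have "continuous_on ({t..\<theta>} \<union> {\<theta>..T}) zg"
  proof (rule continuous_on_closed_Un)
    have "continuous_on {t..\<theta>} z1" using continuous_on_subset[OF first_solution(4)] \<theta>T by auto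
    then show "continuous_on {t..\<theta>} zg" by (rule continuous_on_eq) (auto simp: glue_push_def)
    have "continuous_on {\<theta>..T} (\<lambda>s. z1 \<theta> + z2 s)" by (intro continuous_intros second_solution(4))
    then show "continuous_on {\<theta>..T} zg"
      by (rule continuous_on_eq) (auto simp: glue_push_def second_push_start)
  qed auto
  moreover have "{t..\<theta>} \<union> {\<theta>..T} = {t..T}" using t\<theta> \<theta>T by auto
  ultimately show ?thesis by simp
qed

lemma glued_push_tvar_early: "s \<in> {t..\<theta>} \<Longrightarrow> tvar zg t s = tvar z1 t s"
  by (rule tvar_cong) (auto simp: glue_push_def)

lemma glued_push_tvar_late:
  assumes s: "s \<in> {\<theta>..T}"
  shows "tvar zg t s = tvar z1 t \<theta> + tvar z2 \<theta> s"
proof -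
  have "tvar zg \<theta> s = tvar (\<lambda>u. z2 u + z1 \<theta>) \<theta> s"
    using s by (intro tvar_cong) (auto simp: glue_push_def second_push_start add.commute)
  then have "tvar zg \<theta> s = tvar z2 \<theta> s" by (simp add: tvar_shift)
  moreover have "tvar zg t s = tvar zg t \<theta> + tvar zg \<theta> s" using s t\<theta> by (intro tvar_add) auto
  ultimately show ?thesis using glued_push_tvar_early[of \<theta>] t\<theta> by simp
qed

lemma glued_push_bounded_variation: "bounded_variation_on zg t T"
proof -
  have "tvar z1 t \<theta> < \<infinity>" "tvar z2 \<theta> T < \<infinity>"
    using tvar_mono_fin(3)[of t \<theta> T T z1] first_solution(5) t\<theta> \<theta>T
      second_solution(5) by (auto simp: bounded_variation_on_def)
  then show ?thesis
    unfolding bounded_variation_on_def using glued_push_tvar_late[of T] \<theta>T by auto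
qed

lemma glued_varfun_early: "s \<le> \<theta> \<Longrightarrow> Fg s = varfun z1 t s"
  using glued_push_tvar_early[of s] by (cases "s \<le> t") (auto simp: varfun_def)

lemma glued_varfun_late: "s \<in> {\<theta>..T} \<Longrightarrow> Fg s = varfun z1 t \<theta> + varfun z2 \<theta> s"
proof -
  assume s: "s \<in> {\<theta>..T}"
  have "ereal (Fg s) = tvar zg t s" using varfun_ereal[OF _ _ glued_push_bounded_variation] s t\<theta> by auto
  also have "\<dots> = tvar z1 t \<theta> + tvar z2 \<theta> s" by (rule glued_push_tvar_late[OF s])
  also have "tvar z1 t \<theta> = ereal (varfun z1 t \<theta>)" using varfun_ereal[OF t\<theta> \<theta>T first_solution(5)] by simp
  also have "tvar z2 \<theta> s = ereal (varfun z2 \<theta> s)" using varfun_ereal[OF _ _ second_solution(5)] s by auto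
  finally show ?thesis by simp
qed

text \<open>The glued push is constant after T, so its variation function is too.\<close>
lemma glued_varfun_after: "T \<le> s \<Longrightarrow> Fg s = Fg T"
proof -
  assume Ts: "T \<le> s"
  have tT: "t \<le> T" using t\<theta> \<theta>T by simp
  have "tvar zg T s = 0"
  proof (rule tvar_const[of T s zg "z1 \<theta> + z2 T"])
    fix u assume u: "u \<in> {T..s}"
    show "zg u = z1 \<theta> + z2 T"
    proof (cases "u \<le> \<theta>")
      case True then have "u = \<theta>" "\<theta> = T" using u \<theta>T by auto
      then show ?thesis using second_push_start by (simp add: glue_push_def)
    qed (use u in \<open>auto simp: glue_push_def\<close>)
  qed (use Ts in auto)
  moreover have "tvar zg t s = tvar zg t T + tvar zg T s" using tT Ts by (intro tvar_add)
  ultimately have "tvar zg t s = tvar zg t T" by simp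
  then show ?thesis using Ts tT by (cases "T = t") (auto simp: varfun_def tvar_refl)
qed

lemma glued_varfun_mono: "u \<le> v \<Longrightarrow> Fg u \<le> Fg v"
proof -
  assume uv: "u \<le> v"
  show ?thesis
  proof (cases "v \<le> T")
    case True then show ?thesis using varfun_mono[OF uv True glued_push_bounded_variation] by simp
  next
    case False
    then have "Fg v = Fg T" using glued_varfun_after[of v] by simp
    moreover have "Fg (min u T) \<le> Fg T" using varfun_mono[OF _ _ glued_push_bounded_variation, of "min u T" T] by simp
    moreover have "Fg u = Fg (min u T)" using glued_varfun_after[of u] by (cases "u \<le> T") (auto simp: min_def)
    ultimately show ?thesis by simp
  qed
qed

text \<open>Right-continuity is inherited piecewise from the two solutions.\<close>
lemma glued_varfun_right_continuous: "continuous (at_right s) Fg"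
proof -
  consider "s < t" | "t \<le> s" "s < \<theta>" | "\<theta> \<le> s" "s < T" | "T \<le> s" by linarith
  then show ?thesis
  proof cases
    case 1
    show ?thesis by (rule right_continuous_transfer[of s "\<lambda>_. 0" t]) (use 1 in \<open>auto simp: varfun_le0\<close>)
  next
    case 2
    have "continuous (at_right s) (varfun z1 t)"
      using skorokhod_varfun_right_continuous[OF S1] 2 \<theta>T by auto
    then show ?thesis by (rule right_continuous_transfer[of s _ \<theta>]) (use 2 glued_varfun_early in auto)
  next
    case 3
    have "continuous (at_right s) (varfun z2 \<theta>)" using skorokhod_varfun_right_continuous[OF S2] 3 by auto
    then have "continuous (at_right s) (\<lambda>u. varfun z1 t \<theta> + varfun z2 \<theta> u)"
      by (intro continuous_intros)
    then show ?thesis by (rule right_continuous_transfer[of s _ T]) (use 3 glued_varfun_late in auto)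
  next
    case 4
    show ?thesis
    proof (rule right_continuous_transfer[of s "\<lambda>_. Fg T" "s+1"])
      fix u assume "s \<le> u" "u < s + 1"
      then show "Fg u = Fg T" using 4 by (intro glued_varfun_after) simp
    qed auto
  qed
qed

text \<open>So the variation measure of the glued push is a genuine Lebesgue-Stieltjes measure.\<close>
lemma glued_measure_Ioc: "a \<le> c \<Longrightarrow> emeasure mu {a<..c} = ennreal (Fg c - Fg a)"
  by (rule emeasure_interval_measure_Ioc) (auto intro: glued_varfun_mono glued_varfun_right_continuous)

lemma glued_measure_early: "density mu (indicator {t-1<..\<theta>}) = density mu1 (indicator {t-1<..\<theta>})"
proof (rule density_Ioc_eq)
  fix a c assume ac: "t - 1 \<le> a" "a \<le> c" "c \<le> \<theta>"
  have "emeasure mu {a<..c} = ennreal (Fg c - Fg a)" using glued_measure_Ioc ac by simp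
  also have "\<dots> = ennreal (varfun z1 t c - varfun z1 t a)" using glued_varfun_early ac by simp
  also have "\<dots> = emeasure mu1 {a<..c}" using skorokhod_variation_measure[OF S1] ac \<theta>T by simp
  finally show "emeasure mu {a<..c} = emeasure mu1 {a<..c}" .
next
  show "emeasure mu {t - 1<..\<theta>} \<noteq> \<infinity>" using glued_measure_Ioc[of "t-1" \<theta>] t\<theta> by simp
qed auto

lemma glued_measure_late: "density mu (indicator {\<theta><..T}) = density mu2 (indicator {\<theta><..T})"
proof (rule density_Ioc_eq)
  fix a c assume ac: "\<theta> \<le> a" "a \<le> c" "c \<le> T"
  have "emeasure mu {a<..c} = ennreal (Fg c - Fg a)" using glued_measure_Ioc ac by simp
  also have "\<dots> = ennreal (varfun z2 \<theta> c - varfun z2 \<theta> a)" using glued_varfun_late[of a] glued_varfun_late[of c] ac by simp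
  also have "\<dots> = emeasure mu2 {a<..c}" using skorokhod_variation_measure[OF S2] ac by simp
  finally show "emeasure mu {a<..c} = emeasure mu2 {a<..c}" .
next
  show "emeasure mu {\<theta><..T} \<noteq> \<infinity>" using glued_measure_Ioc[of \<theta> T] \<theta>T by simp
qed auto

lemma reflection_integrands_measurable:
  "h \<in> borel_measurable borel" "h1 \<in> borel_measurable borel" "h2 \<in> borel_measurable borel"
proof -
  have "Yg \<in> borel_measurable borel"
    by (rule path_measurable[OF glued_path_continuous]) (use t\<theta> \<theta>T in \<open>auto simp: glue_path_def\<close>)
  then show "h \<in> borel_measurable borel" by (rule reflection_integrand_measurable[OF _ data_regularity(3)])
  have "Y1 \<in> borel_measurable borel" by (rule path_measurable[OF first_solution(1)]) (use first_solution(3) in auto)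
  then show "h1 \<in> borel_measurable borel" by (rule reflection_integrand_measurable[OF _ data_regularity(3)])
  have "Y2 \<in> borel_measurable borel" by (rule path_measurable[OF second_solution(1)]) (use second_solution(3) in auto)
  then show "h2 \<in> borel_measurable borel" by (rule reflection_integrand_measurable[OF _ data_regularity(3)])
qed

lemma glued_integrand_bounded: obtains B where "\<And>u. u \<in> {t..T} \<Longrightarrow> norm (h u) \<le> B"
proof -
  obtain B where B: "\<forall>y\<in>closure Dom. norm (\<gamma> y) \<le> B"
    using compact_imp_bounded[OF compact_continuous_image[OF
        continuous_on_subset[OF data_regularity(3)] data_regularity(4)]]
    unfolding bounded_iff by auto
  have "norm (h u) \<le> B" if "u \<in> {t..T}" for u
  proof -
    have "Yg u \<in> closure Dom" using that first_solution(2) second_solution(2) by (auto simp: glue_path_def)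
    then have "norm (\<gamma> (Yg u)) \<le> B" using B by auto
    moreover have "norm (h u) \<le> norm (\<gamma> (Yg u))" by (simp add: indicator_def)
    ultimately show ?thesis by linarith
  qed
  then show ?thesis using that by blast
qed

lemma glued_push_equation_early:
  assumes s: "s \<in> {t..\<theta>}"
  shows "zg s = (LINT u:{t..s}|mu. h u)"
proof -
  have "(LINT u:{t..s}|mu. h u) = (LINT u:{t..s}|mu1. h u)"
    by (rule set_integral_density_eq[OF _ _ glued_measure_early _ _ reflection_integrands_measurable(1)])
       (use s in auto)
  also have "\<dots> = (LINT u:{t..s}|mu1. h1 u)"
    by (rule set_lebesgue_integral_cong) (use s in \<open>auto simp: glue_path_def\<close>)
  also have "\<dots> = z1 s" using first_solution(7) s \<theta>T by auto
  finally show ?thesis using s by (simp add: glue_push_def)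
qed

lemma glued_integrand_integrable:
  assumes S: "S \<in> sets borel" "S \<subseteq> {t..T}"
  shows "set_integrable mu S h"
proof -
  obtain B where B: "\<And>u. u \<in> {t..T} \<Longrightarrow> norm (h u) \<le> B" using glued_integrand_bounded by blast
  have "emeasure mu S \<le> emeasure mu {t-1<..T}" using S by (intro emeasure_mono) auto
  also have "\<dots> < \<infinity>" using glued_measure_Ioc[of "t-1" T] t\<theta> \<theta>T by simp
  finally show ?thesis
    using S B by (intro bounded_set_integrable[OF _ S(1) _ reflection_integrands_measurable(1), of _ B]) auto
qed

lemma glued_push_equation_late:
  assumes s: "s \<in> {\<theta><..T}"
  shows "zg s = (LINT u:{t..s}|mu. h u)"
proof -
  have un: "{t..s} = {t..\<theta>} \<union> {\<theta><..s}" using s t\<theta> by auto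
  have i1: "set_integrable mu {t..\<theta>} h" and i2: "set_integrable mu {\<theta><..s} h"
    using s t\<theta> \<theta>T by (auto intro!: glued_integrand_integrable)
  have "(LINT u:{t..s}|mu. h u) = (LINT u:{t..\<theta>}|mu. h u) + (LINT u:{\<theta><..s}|mu. h u)"
    unfolding un by (rule set_integral_Un[OF _ i1 i2]) auto
  also have "(LINT u:{t..\<theta>}|mu. h u) = z1 \<theta>"
    using glued_push_equation_early[of \<theta>] t\<theta> by (simp add: glue_push_def)
  also have "(LINT u:{\<theta><..s}|mu. h u) = (LINT u:{\<theta><..s}|mu2. h u)"
    by (rule set_integral_density_eq[OF _ _ glued_measure_late _ _ reflection_integrands_measurable(1)])
       (use s in auto)
  also have "\<dots> = (LINT u:{\<theta><..s}|mu2. h2 u)"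
    by (rule set_lebesgue_integral_cong) (use s t\<theta> in \<open>auto simp: glue_path_def\<close>)
  also have "\<dots> = (LINT u:{\<theta>..s}|mu2. h2 u)"
  proof (rule set_integral_cong_set)
    have sm: "sets mu2 = sets borel" by simp
    show "set_borel_measurable mu2 {\<theta><..s} h2" "set_borel_measurable mu2 {\<theta>..s} h2"
      unfolding set_borel_measurable_def measurable_cong_sets[OF sm refl]
      by (intro borel_measurable_scaleR borel_measurable_indicator reflection_integrands_measurable(3); simp)+
    have "{\<theta>} \<in> null_sets mu2" using second_measure_start_null by (auto intro: null_setsI)
    then show "AE x in mu2. (x \<in> {\<theta>..s}) = (x \<in> {\<theta><..s})" by (rule AE_I') auto
  qed
  also have "\<dots> = z2 s" using second_solution(7) s by auto
  finally show ?thesis using s by (simp add: glue_push_def)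
qed

lemma first_drift_integrable: "set_integrable lebesgue {t..\<theta>} drift1"
proof (rule drift_integrable[OF data_regularity(1,2) t0 \<theta>T])
  show "continuous_on {t..\<theta>} Y1" using continuous_on_subset[OF first_solution(1)] \<theta>T by auto
  show "\<forall>u\<in>{t..\<theta>}. Y1 u \<in> closure Dom" using first_solution(2) \<theta>T by auto
  show "set_integrable lebesgue {t..\<theta>} \<alpha>" by (rule L2_set_integrable[OF L1 _ \<theta>T]) simp
qed

lemma second_drift_integrable:
  assumes sT: "s \<le> T"
  shows "set_integrable lebesgue {\<theta>..s} drift2"
proof (rule drift_integrable[OF data_regularity(1,2) _ sT])
  show "0 \<le> \<theta>" using t0 t\<theta> by simp
  show "continuous_on {\<theta>..s} Y2" using continuous_on_subset[OF second_solution(1)] sT by auto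
  show "\<forall>u\<in>{\<theta>..s}. Y2 u \<in> closure Dom" using second_solution(2) sT by auto
  show "set_integrable lebesgue {\<theta>..s} \<beta>" by (rule L2_set_integrable[OF L2b _ sT]) simp
qed

lemma glued_path_equation:
  assumes s: "s \<in> {t..T}"
  shows "Yg s = x + (LINT u:{t..s}|lebesgue. drift u) - zg s"
proof (cases "s \<le> \<theta>")
  case True
  have "(LINT u:{t..s}|lebesgue. drift u) = (LINT u:{t..s}|lebesgue. drift1 u)"
    by (rule set_lebesgue_integral_cong) (use True in \<open>auto simp: glue_path_def concat_at_def\<close>)
  then show ?thesis using first_solution(6) s True by (auto simp: glue_path_def glue_push_def)
next
  case False
  have e1: "\<forall>u\<in>{t..\<theta>}. drift u = drift1 u" by (auto simp: glue_path_def concat_at_def)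
  have e2: "\<forall>u\<in>{\<theta><..s}. drift u = drift2 u" using s by (auto simp: glue_path_def concat_at_def)
  have i2: "set_integrable lebesgue {\<theta><..s} drift2"
    by (rule set_integrable_subset[OF second_drift_integrable]) (use s in auto)
  have "(LINT u:{t..s}|lebesgue. drift u) = (LINT u:{t..\<theta>}|lebesgue. drift u) + (LINT u:{\<theta><..s}|lebesgue. drift u)"
  proof (rule set_integral_split_mid)
    show "set_integrable lebesgue {t..\<theta>} drift"
      using first_drift_integrable set_integrable_cong[OF refl refl, of "{t..\<theta>}" drift drift1] e1 by auto
    show "set_integrable lebesgue {\<theta><..s} drift"
      using i2 set_integrable_cong[OF refl refl, of "{\<theta><..s}" drift drift2] e2 by auto
  qed (use t\<theta> False in auto)
  also have "(LINT u:{t..\<theta>}|lebesgue. drift u) = (LINT u:{t..\<theta>}|lebesgue. drift1 u)"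
    using e1 by (intro set_lebesgue_integral_cong) auto
  also have "(LINT u:{\<theta><..s}|lebesgue. drift u) = (LINT u:{\<theta><..s}|lebesgue. drift2 u)"
    using e2 by (intro set_lebesgue_integral_cong) auto
  also have "\<dots> = (LINT u:{\<theta>..s}|lebesgue. drift2 u)"
    using set_integral_drop_left[OF second_drift_integrable[of s]] s False by auto
  finally have I: "(LINT u:{t..s}|lebesgue. drift u) =
      (LINT u:{t..\<theta>}|lebesgue. drift1 u) + (LINT u:{\<theta>..s}|lebesgue. drift2 u)" .
  have Y1: "Y1 \<theta> = x + (LINT u:{t..\<theta>}|lebesgue. drift1 u) - z1 \<theta>" using first_solution(6) t\<theta> \<theta>T by auto
  have Y2: "Y2 s = Y1 \<theta> + (LINT u:{\<theta>..s}|lebesgue. drift2 u) - z2 s" using second_solution(6) s False by auto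
  have "Yg s = Y2 s" "zg s = z1 \<theta> + z2 s" using s False by (auto simp: glue_path_def glue_push_def)
  then show ?thesis unfolding I Y2 Y1 by (simp add: algebra_simps)
qed

theorem concatenation_solves: "skorokhod T Dom \<gamma> b \<sigma> t x (concat_at \<theta> \<alpha> \<beta>) Yg zg"
  unfolding skorokhod_def
proof (intro conjI)
  show "continuous_on {t..T} Yg" by (rule glued_path_continuous)
  show "\<forall>s\<in>{t..T}. Yg s \<in> closure Dom"
    using first_solution(2) second_solution(2) by (auto simp: glue_path_def)
  show "\<forall>s. s \<notin> {t..T} \<longrightarrow> Yg s = x" using t\<theta> \<theta>T by (auto simp: glue_path_def)
  show "continuous_on {t..T} zg" by (rule glued_push_continuous)
  show "bounded_variation_on zg t T" by (rule glued_push_bounded_variation)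
  show "\<forall>s\<in>{t..T}. Yg s = x + (LINT u:{t..s}|lebesgue. drift u) - zg s"
    using glued_path_equation by blast
  show "\<forall>s\<in>{t..T}. zg s = (LINT u:{t..s}|mu. h u)"
  proof
    fix s assume s: "s \<in> {t..T}"
    show "zg s = (LINT u:{t..s}|mu. h u)"
    proof (cases "s \<le> \<theta>")
      case True then show ?thesis using glued_push_equation_early s by auto
    next
      case False then show ?thesis using glued_push_equation_late s by auto
    qed
  qed
qed

end

lemma L2_zero: "L2 \<theta> T (\<lambda>_. 0)"
  unfolding L2_def by (simp add: set_integrable_def)

lemma L2_mono:
  assumes "L2 t T \<alpha>" "t \<le> \<theta>"
  shows "L2 \<theta> T \<alpha>"
proof -
  have m: "(\<lambda>s. indicator {t..T} s *\<^sub>R \<alpha> s) \<in> borel_measurable lebesgue"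
    and i: "set_integrable lebesgue {t..T} (\<lambda>s. (norm (\<alpha> s))\<^sup>2)" using assms unfolding L2_def by auto
  have "(\<lambda>s. indicator {\<theta>..T} s *\<^sub>R \<alpha> s) = (\<lambda>s. indicator {\<theta>..T} s *\<^sub>R (indicator {t..T} s *\<^sub>R \<alpha> s))"
    using assms(2) by (auto simp: fun_eq_iff split: split_indicator)
  also have "\<dots> \<in> borel_measurable lebesgue"
    by (rule borel_measurable_scaleR[OF borel_measurable_indicator m]) simp
  finally have "(\<lambda>s. indicator {\<theta>..T} s *\<^sub>R \<alpha> s) \<in> borel_measurable lebesgue" .
  moreover have "set_integrable lebesgue {\<theta>..T} (\<lambda>s. (norm (\<alpha> s))\<^sup>2)"
    by (rule set_integrable_subset[OF i]) (use assms(2) in auto)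
  ultimately show ?thesis unfolding L2_def by simp
qed

lemma L2_concat:
  assumes L1: "L2 t T \<alpha>" and L2b: "L2 \<theta> T \<beta>" and "t \<le> \<theta>" "\<theta> \<le> T"
  shows "L2 t T (concat_at \<theta> \<alpha> \<beta>)"
proof -
  have m1: "(\<lambda>s. indicator {t..T} s *\<^sub>R \<alpha> s) \<in> borel_measurable lebesgue"
    and i1: "set_integrable lebesgue {t..T} (\<lambda>s. (norm (\<alpha> s))\<^sup>2)" using L1 unfolding L2_def by auto
  have m2: "(\<lambda>s. indicator {\<theta>..T} s *\<^sub>R \<beta> s) \<in> borel_measurable lebesgue"
    and i2: "set_integrable lebesgue {\<theta>..T} (\<lambda>s. (norm (\<beta> s))\<^sup>2)" using L2b unfolding L2_def by auto
  have "(\<lambda>s. indicator {t..T} s *\<^sub>R concat_at \<theta> \<alpha> \<beta> s) =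
        (\<lambda>s. indicator {t..\<theta>} s *\<^sub>R (indicator {t..T} s *\<^sub>R \<alpha> s) + indicator {\<theta><..T} s *\<^sub>R (indicator {\<theta>..T} s *\<^sub>R \<beta> s))"
    using assms by (auto simp: fun_eq_iff concat_at_def split: split_indicator)
  also have "\<dots> \<in> borel_measurable lebesgue"
    by (intro borel_measurable_add borel_measurable_scaleR[OF borel_measurable_indicator m1]
          borel_measurable_scaleR[OF borel_measurable_indicator m2]) simp_all
  finally have m: "(\<lambda>s. indicator {t..T} s *\<^sub>R concat_at \<theta> \<alpha> \<beta> s) \<in> borel_measurable lebesgue" .
  have "set_integrable lebesgue {t..\<theta>} (\<lambda>s. (norm (\<alpha> s))\<^sup>2)"
    by (rule set_integrable_subset[OF i1]) (use assms in auto)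
  then have ia: "set_integrable lebesgue {t..\<theta>} (\<lambda>s. (norm (concat_at \<theta> \<alpha> \<beta> s))\<^sup>2)"
    by (rule set_integrable_cong[THEN iffD1, rotated -1]) (auto simp: concat_at_def)
  have "set_integrable lebesgue {\<theta><..T} (\<lambda>s. (norm (\<beta> s))\<^sup>2)"
    by (rule set_integrable_subset[OF i2]) auto
  then have ib: "set_integrable lebesgue {\<theta><..T} (\<lambda>s. (norm (concat_at \<theta> \<alpha> \<beta> s))\<^sup>2)"
    by (rule set_integrable_cong[THEN iffD1, rotated -1]) (auto simp: concat_at_def)
  have "set_integrable lebesgue ({t..\<theta>} \<union> {\<theta><..T}) (\<lambda>s. (norm (concat_at \<theta> \<alpha> \<beta> s))\<^sup>2)"
    by (rule set_integrable_Un[OF ia ib]) auto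
  moreover have "{t..\<theta>} \<union> {\<theta><..T} = {t..T}" using assms by auto
  ultimately show ?thesis using m unfolding L2_def by simp
qed

lemma energy_nonneg: "0 \<le> energy \<alpha> t s"
  unfolding energy_def set_lebesgue_integral_def by (auto intro!: integral_nonneg_AE)

lemma energy_concat:
  assumes L1: "L2 t T \<alpha>" and L2b: "L2 \<theta> T \<beta>" and "t \<le> \<theta>" "\<theta> \<le> M" "M \<le> T"
  shows "energy (concat_at \<theta> \<alpha> \<beta>) t M = energy \<alpha> t \<theta> + energy \<beta> \<theta> M"
proof -
  let ?c = "\<lambda>s. (norm (concat_at \<theta> \<alpha> \<beta> s))\<^sup>2"
  have i1: "set_integrable lebesgue {t..T} (\<lambda>s. (norm (\<alpha> s))\<^sup>2)" using L1 unfolding L2_def by auto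
  have i2: "set_integrable lebesgue {\<theta>..T} (\<lambda>s. (norm (\<beta> s))\<^sup>2)" using L2b unfolding L2_def by auto
  have ia: "set_integrable lebesgue {t..\<theta>} (\<lambda>s. (norm (\<alpha> s))\<^sup>2)"
    by (rule set_integrable_subset[OF i1]) (use assms in auto)
  have ib: "set_integrable lebesgue {\<theta>..M} (\<lambda>s. (norm (\<beta> s))\<^sup>2)"
    by (rule set_integrable_subset[OF i2]) (use assms in auto)
  have ib': "set_integrable lebesgue {\<theta><..M} (\<lambda>s. (norm (\<beta> s))\<^sup>2)"
    by (rule set_integrable_subset[OF ib]) auto
  have ea: "\<forall>s\<in>{t..\<theta>}. ?c s = (norm (\<alpha> s))\<^sup>2" by (auto simp: concat_at_def)
  have eb: "\<forall>s\<in>{\<theta><..M}. ?c s = (norm (\<beta> s))\<^sup>2" by (auto simp: concat_at_def)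
  have "(LINT s:{t..M}|lebesgue. ?c s) = (LINT s:{t..\<theta>}|lebesgue. ?c s) + (LINT s:{\<theta><..M}|lebesgue. ?c s)"
  proof (rule set_integral_split_mid)
    show "set_integrable lebesgue {t..\<theta>} ?c"
      using ia set_integrable_cong[OF refl refl, of "{t..\<theta>}" ?c] ea by auto
    show "set_integrable lebesgue {\<theta><..M} ?c"
      using ib' set_integrable_cong[OF refl refl, of "{\<theta><..M}" ?c] eb by auto
  qed (use assms in auto)
  also have "(LINT s:{t..\<theta>}|lebesgue. ?c s) = (LINT s:{t..\<theta>}|lebesgue. (norm (\<alpha> s))\<^sup>2)"
    using ea by (intro set_lebesgue_integral_cong) auto
  also have "(LINT s:{\<theta><..M}|lebesgue. ?c s) = (LINT s:{\<theta><..M}|lebesgue. (norm (\<beta> s))\<^sup>2)"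
    using eb by (intro set_lebesgue_integral_cong) auto
  also have "\<dots> = (LINT s:{\<theta>..M}|lebesgue. (norm (\<beta> s))\<^sup>2)"
    using set_integral_drop_left[OF ib] assms by simp
  finally show ?thesis unfolding energy_def by (simp add: algebra_simps)
qed

lemma energy_switched_off:
  fixes \<alpha> :: "real \<Rightarrow> real^'m"
  assumes L1: "L2 t T \<alpha>" and "t \<le> M" "M \<le> T"
  shows "energy (concat_at M \<alpha> (\<lambda>_. 0)) t T = energy \<alpha> t M"
proof -
  have "energy (concat_at M \<alpha> (\<lambda>_. 0)) t T = energy \<alpha> t M + energy (\<lambda>_. 0::real^'m) M T"
    by (rule energy_concat[OF L1 L2_zero]) (use assms in auto)
  then show ?thesis by (simp add: energy_def)
qed

locale reflected_dynamics =
  fixes T :: real and Dom :: "(real^'d) set" and n \<gamma> :: "real^'d \<Rightarrow> real^'d"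
    and b :: "real \<Rightarrow> real^'d \<Rightarrow> real^'d" and \<sigma> :: "real \<Rightarrow> real^'d \<Rightarrow> real^'m^'d"
  assumes std: "standing_assumptions T Dom n \<gamma> b \<sigma>"
    and wellposed: "reflected_solution_exists_unique T Dom \<gamma> b \<sigma>"
begin

abbreviation "Yf \<equiv> Yflow T Dom \<gamma> b \<sigma>"

lemma Yf_solves:
  assumes "t \<in> {0..T}" "x \<in> closure Dom" "L2 t T \<alpha>"
  shows "\<exists>z. skorokhod T Dom \<gamma> b \<sigma> t x \<alpha> (Yf t x \<alpha>) z"
proof -
  have "\<exists>!Y. \<exists>z. skorokhod T Dom \<gamma> b \<sigma> t x \<alpha> Y z"
    using wellposed assms unfolding reflected_solution_exists_unique_def by blast
  then show ?thesis unfolding Yflow_def by (rule theI')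
qed

lemma Yf_unique:
  assumes "t \<in> {0..T}" "x \<in> closure Dom" "L2 t T \<alpha>" "skorokhod T Dom \<gamma> b \<sigma> t x \<alpha> Y z"
  shows "Y = Yf t x \<alpha>"
proof -
  have "\<exists>!Y. \<exists>z. skorokhod T Dom \<gamma> b \<sigma> t x \<alpha> Y z"
    using wellposed assms unfolding reflected_solution_exists_unique_def by blast
  then show ?thesis unfolding Yflow_def by (rule the1_equality[symmetric]) (use assms(4) in blast)
qed

lemma Yf_props:
  assumes "t \<in> {0..T}" "x \<in> closure Dom" "L2 t T \<alpha>"
  shows "continuous_on {t..T} (Yf t x \<alpha>)" "\<forall>s\<in>{t..T}. Yf t x \<alpha> s \<in> closure Dom"
  using Yf_solves[OF assms] unfolding skorokhod_def by auto

lemma Yf_concat: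
  assumes "0 \<le> t" "t \<le> \<theta>" "\<theta> \<le> T" "x \<in> closure Dom" "L2 t T \<alpha>" "L2 \<theta> T \<beta>"
  shows Yf_concat_early: "s \<in> {t..\<theta>} \<Longrightarrow> Yf t x (concat_at \<theta> \<alpha> \<beta>) s = Yf t x \<alpha> s"
    and Yf_concat_late: "s \<in> {\<theta>..T} \<Longrightarrow> Yf t x (concat_at \<theta> \<alpha> \<beta>) s = Yf \<theta> (Yf t x \<alpha> \<theta>) \<beta> s"
proof -
  obtain z1 where S1: "skorokhod T Dom \<gamma> b \<sigma> t x \<alpha> (Yf t x \<alpha>) z1"
    using Yf_solves assms by fastforce
  have y: "Yf t x \<alpha> \<theta> \<in> closure Dom" using Yf_props(2)[of t x \<alpha>] assms by auto
  obtain z2 where S2: "skorokhod T Dom \<gamma> b \<sigma> \<theta> (Yf t x \<alpha> \<theta>) \<beta> (Yf \<theta> (Yf t x \<alpha> \<theta>) \<beta>) z2"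
    using Yf_solves[of \<theta> "Yf t x \<alpha> \<theta>" \<beta>] assms y by fastforce
  interpret G: skorokhod_concatenation T Dom n \<gamma> b \<sigma> t \<theta> x \<alpha> \<beta> "Yf t x \<alpha>" z1 "Yf \<theta> (Yf t x \<alpha> \<theta>) \<beta>" z2
    by unfold_locales (use std assms S1 S2 in auto)
  have glued: "Yf t x (concat_at \<theta> \<alpha> \<beta>) = G.Yg"
    using Yf_unique[OF _ assms(4) L2_concat[OF assms(5,6,2,3)] G.concatenation_solves] assms by auto
  show "s \<in> {t..\<theta>} \<Longrightarrow> Yf t x (concat_at \<theta> \<alpha> \<beta>) s = Yf t x \<alpha> s"
    unfolding glued by (simp add: glue_path_def)
  show "s \<in> {\<theta>..T} \<Longrightarrow> Yf t x (concat_at \<theta> \<alpha> \<beta>) s = Yf \<theta> (Yf t x \<alpha> \<theta>) \<beta> s"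
    unfolding glued using G.second_path_start by (auto simp: glue_path_def)
qed

end

section \<open>The value functions\<close>

lemma Max_remove_min:
  fixes f :: "'a \<Rightarrow> 'b::linorder"
  assumes "finite I" "i \<in> I" "I - {i} \<noteq> {}" "\<forall>j\<in>I-{i}. f i \<le> f j"
  shows "Max (f ` I) = Max (f ` (I - {i}))"
proof -
  have e: "f ` I = insert (f i) (f ` (I - {i}))" using assms(2) by blast
  obtain j where j: "j \<in> I - {i}" using assms(3) by blast
  have "f i \<le> f j" using assms(4) j by blast
  also have "f j \<le> Max (f ` (I - {i}))" using assms(1) j by (intro Max_ge) auto
  finally show ?thesis unfolding e using assms(1,3) by (subst Max_insert) auto
qed

lemma Max_image_in:
  fixes f :: "'a \<Rightarrow> 'b::linorder"
  assumes "finite I" "I \<noteq> {}" "\<forall>j\<in>I. f j \<in> S"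
  shows "Max (f ` I) \<in> S"
proof -
  have "Max (f ` I) \<in> f ` I" using assms(1,2) by (intro Max_in) auto
  then show ?thesis using assms(3) by auto
qed

locale value_functions = reflected_dynamics T Dom n \<gamma> b \<sigma>
  for T :: real and Dom :: "(real^'d) set" and n \<gamma> :: "real^'d \<Rightarrow> real^'d"
    and b :: "real \<Rightarrow> real^'d \<Rightarrow> real^'d" and \<sigma> :: "real \<Rightarrow> real^'d \<Rightarrow> real^'m^'d" +
  fixes g :: "nat \<Rightarrow> real \<Rightarrow> real^'d" and r :: "nat \<Rightarrow> real" and A :: real
  assumes g_cont: "\<And>i. continuous_on {0..T} (g i) \<and> g i ` {0..T} \<subseteq> closure Dom"
    and A_pos: "A > 0"
begin

abbreviation "BB i \<equiv> ball_set T Dom g r i"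
abbreviation "V I s y \<equiv> vIA T Dom \<gamma> b \<sigma> g r I A s y"
abbreviation "PHI I \<equiv> phiIA T Dom \<gamma> b \<sigma> g r I A"

definition cost where
  "cost I s y \<alpha> \<theta> = energy \<alpha> s (Max (\<theta> ` I)) +
     (\<Sum>i\<in>I. A * indicator (BB i) (\<theta> i, Yf s y \<alpha> (\<theta> i)))"

lemma cost_nonneg: "0 \<le> cost I s y \<alpha> \<theta>"
  unfolding cost_def using A_pos by (intro add_nonneg_nonneg energy_nonneg sum_nonneg) auto

lemma V_eq_Inf_cost: "V I s y = Inf {cost I s y \<alpha> \<theta> | \<alpha> \<theta>. L2 s T \<alpha> \<and> (\<forall>i\<in>I. \<theta> i \<in> {s..T})}"
  unfolding vIA_def cost_def by simp

lemma V_le_cost: "L2 s T \<alpha> \<Longrightarrow> (\<forall>i\<in>I. \<theta> i \<in> {s..T}) \<Longrightarrow> V I s y \<le> cost I s y \<alpha> \<theta>"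
  unfolding V_eq_Inf_cost
  by (rule cInf_lower) (auto intro!: bdd_belowI[of _ 0] cost_nonneg)

lemma V_greatest:
  assumes "s \<le> T" "\<And>\<alpha> \<theta>. L2 s T \<alpha> \<Longrightarrow> (\<forall>i\<in>I. \<theta> i \<in> {s..T}) \<Longrightarrow> c \<le> cost I s y \<alpha> \<theta>"
  shows "c \<le> V I s y"
  unfolding V_eq_Inf_cost
proof (rule cInf_greatest)
  show "{cost I s y \<alpha> \<theta> | \<alpha> \<theta>. L2 s T \<alpha> \<and> (\<forall>i\<in>I. \<theta> i \<in> {s..T})} \<noteq> {}"
    using assms(1) L2_zero by fastforce
qed (use assms(2) in auto)

lemma V_nonneg: "s \<le> T \<Longrightarrow> 0 \<le> V I s y"
  by (rule V_greatest) (auto intro: cost_nonneg)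

lemma PHI_single: "PHI {i} (s,y) = A * indicator (BB i) (s,y)"
  unfolding phiIA_def by simp

lemma PHI_multi: "card I \<noteq> 1 \<Longrightarrow> PHI I (s,y) = Min ((\<lambda>i. A * indicator (BB i) (s,y) + V (I - {i}) s y) ` I)"
  unfolding phiIA_def prod.case by (rule if_not_P)

lemma PHI_nonneg:
  assumes "finite I" "I \<noteq> {}" "s \<le> T"
  shows "0 \<le> PHI I (s, y)"
proof (cases "card I = 1")
  case True
  then obtain i where "I = {i}" by (rule card_1_singletonE)
  then show ?thesis using A_pos by (simp add: PHI_single)
next
  case False
  have "0 \<le> A * indicator (BB i) (s,y) + V (I - {i}) s y" for i
    using A_pos V_nonneg[OF assms(3)] by (intro add_nonneg_nonneg) auto
  then show ?thesis unfolding PHI_multi[OF False] using assms(1,2) by (intro Min.boundedI) auto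
qed

lemma vphi_le:
  assumes "finite I" "I \<noteq> {}" "L2 t T \<alpha>" "\<theta> \<in> {t..T}"
  shows "vphi T Dom \<gamma> b \<sigma> (PHI I) t x \<le> energy \<alpha> t \<theta> + PHI I (\<theta>, Yf t x \<alpha> \<theta>)"
  unfolding vphi_def
proof (rule cInf_lower)
  have "0 \<le> energy \<alpha> t \<theta> + PHI I (\<theta>, Yf t x \<alpha> \<theta>)" if "\<theta> \<in> {t..T}" for \<alpha> \<theta>
    using that assms(1,2) by (intro add_nonneg_nonneg energy_nonneg PHI_nonneg) auto
  then show "bdd_below {energy \<alpha> t \<theta> + PHI I (\<theta>, Yf t x \<alpha> \<theta>) | \<alpha> \<theta>. L2 t T \<alpha> \<and> \<theta> \<in> {t..T}}"
    by (intro bdd_belowI[of _ 0]) blast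
qed (use assms in blast)

lemma vphi_greatest:
  assumes "t \<le> T" "\<And>\<alpha> \<theta>. L2 t T \<alpha> \<Longrightarrow> \<theta> \<in> {t..T} \<Longrightarrow> c \<le> energy \<alpha> t \<theta> + PHI I (\<theta>, Yf t x \<alpha> \<theta>)"
  shows "c \<le> vphi T Dom \<gamma> b \<sigma> (PHI I) t x"
  unfolding vphi_def
proof (rule cInf_greatest)
  show "{energy \<alpha> t \<theta> + PHI I (\<theta>, Yf t x \<alpha> \<theta>) | \<alpha> \<theta>. L2 t T \<alpha> \<and> \<theta> \<in> {t..T}} \<noteq> {}"
    using assms(1) L2_zero by fastforce
qed (use assms(2) in blast)

subsection \<open>Part (1): dynamic programming at the first stopping time\<close>

lemma part1_single:
  assumes "t \<in> {0..T}"
  shows "V {i} t x = vphi T Dom \<gamma> b \<sigma> (PHI {i}) t x"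
proof -
  have sum_single: "(\<Sum>j\<in>{i}. f j) = f i" for f :: "nat \<Rightarrow> real" by simp
  have cost: "cost {i} t x \<alpha> \<theta> = energy \<alpha> t (\<theta> i) + PHI {i} (\<theta> i, Yf t x \<alpha> (\<theta> i))" for \<alpha> \<theta>
    unfolding cost_def PHI_single sum_single by simp
  show ?thesis
  proof (rule antisym)
    show "V {i} t x \<le> vphi T Dom \<gamma> b \<sigma> (PHI {i}) t x"
    proof (rule vphi_greatest)
      fix \<alpha> :: "real \<Rightarrow> real^'m" and \<theta> assume "L2 t T \<alpha>" "\<theta> \<in> {t..T}"
      then have "V {i} t x \<le> cost {i} t x \<alpha> (\<lambda>_. \<theta>)" by (intro V_le_cost) auto
      then show "V {i} t x \<le> energy \<alpha> t \<theta> + PHI {i} (\<theta>, Yf t x \<alpha> \<theta>)" unfolding cost .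
    qed (use assms in simp)
    show "vphi T Dom \<gamma> b \<sigma> (PHI {i}) t x \<le> V {i} t x"
      using assms by (intro V_greatest) (use vphi_le cost in auto)
  qed
qed

lemma cost_split:
  assumes fin: "finite I" and iI: "i \<in> I" and rest: "I - {i} \<noteq> {}"
    and tx: "t \<in> {0..T}" "x \<in> closure Dom" and L: "L2 t T \<alpha>" and \<theta>0: "\<theta>0 \<in> {t..T}"
    and Lb: "L2 \<theta>0 T \<beta>" and h\<theta>: "\<forall>j\<in>I - {i}. \<theta> j \<in> {\<theta>0..T}"
  shows "cost I t x (concat_at \<theta>0 \<alpha> \<beta>) (\<theta>(i := \<theta>0)) =
         energy \<alpha> t \<theta>0 + A * indicator (BB i) (\<theta>0, Yf t x \<alpha> \<theta>0) + cost (I - {i}) \<theta>0 (Yf t x \<alpha> \<theta>0) \<beta> \<theta>"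
proof -
  define y0 where "y0 = Yf t x \<alpha> \<theta>0"
  define M where "M = Max (\<theta> ` (I - {i}))"
  have t0: "0 \<le> t" using tx by simp
  have "Max (\<theta>(i := \<theta>0) ` I) = Max (\<theta>(i := \<theta>0) ` (I - {i}))"
    by (rule Max_remove_min[OF fin iI rest]) (use h\<theta> in simp)
  also have "\<theta>(i := \<theta>0) ` (I - {i}) = \<theta> ` (I - {i})" by auto
  finally have Max_eq: "Max (\<theta>(i := \<theta>0) ` I) = M" unfolding M_def .
  have M: "M \<in> {\<theta>0..T}" unfolding M_def by (rule Max_image_in) (use fin rest h\<theta> in auto)
  have energy: "energy (concat_at \<theta>0 \<alpha> \<beta>) t M = energy \<alpha> t \<theta>0 + energy \<beta> \<theta>0 M"
    by (rule energy_concat[OF L Lb]) (use \<theta>0 M in auto)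
  have at_i: "Yf t x (concat_at \<theta>0 \<alpha> \<beta>) \<theta>0 = y0"
    unfolding y0_def using Yf_concat_early[OF t0 _ _ tx(2) L Lb] \<theta>0 by auto
  have at_rest: "Yf t x (concat_at \<theta>0 \<alpha> \<beta>) (\<theta> j) = Yf \<theta>0 y0 \<beta> (\<theta> j)" if "j \<in> I - {i}" for j
    unfolding y0_def using Yf_concat_late[OF t0 _ _ tx(2) L Lb] \<theta>0 h\<theta> that by auto
  have "(\<Sum>j\<in>I. A * indicator (BB j) ((\<theta>(i := \<theta>0)) j, Yf t x (concat_at \<theta>0 \<alpha> \<beta>) ((\<theta>(i := \<theta>0)) j))) =
        A * indicator (BB i) (\<theta>0, y0) + (\<Sum>j\<in>I - {i}. A * indicator (BB j) (\<theta> j, Yf \<theta>0 y0 \<beta> (\<theta> j)))"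
  proof -
    have "(\<Sum>j\<in>I - {i}. A * indicator (BB j) ((\<theta>(i := \<theta>0)) j, Yf t x (concat_at \<theta>0 \<alpha> \<beta>) ((\<theta>(i := \<theta>0)) j))) =
          (\<Sum>j\<in>I - {i}. A * indicator (BB j) (\<theta> j, Yf \<theta>0 y0 \<beta> (\<theta> j)))"
      by (rule sum.cong[OF refl]) (use at_rest in auto)
    then show ?thesis unfolding sum.remove[OF fin iI] using at_i by simp
  qed
  then show ?thesis
    unfolding cost_def Max_eq M_def[symmetric] energy y0_def by simp
qed

lemma remove_nonempty:
  assumes "card I \<noteq> 1" "i \<in> I"
  shows "I - {i} \<noteq> {}"
proof
  assume "I - {i} = {}"
  then have "I = {i}" using assms(2) by blast
  then show False using assms(1) by simp
qed

lemma V_le_branch: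
  assumes fin: "finite I" and c1: "card I \<noteq> 1" and iI: "i \<in> I"
    and tx: "t \<in> {0..T}" "x \<in> closure Dom" and L: "L2 t T \<alpha>" and \<theta>0: "\<theta>0 \<in> {t..T}"
  shows "V I t x \<le> energy \<alpha> t \<theta>0 + A * indicator (BB i) (\<theta>0, Yf t x \<alpha> \<theta>0) + V (I - {i}) \<theta>0 (Yf t x \<alpha> \<theta>0)"
proof -
  define C where "C = energy \<alpha> t \<theta>0 + A * indicator (BB i) (\<theta>0, Yf t x \<alpha> \<theta>0)"
  have "V I t x - C \<le> V (I - {i}) \<theta>0 (Yf t x \<alpha> \<theta>0)"
  proof (rule V_greatest)
    show "\<theta>0 \<le> T" using \<theta>0 by simp
    fix \<beta> :: "real \<Rightarrow> real^'m" and \<theta> assume Lb: "L2 \<theta>0 T \<beta>" and h\<theta>: "\<forall>j\<in>I - {i}. \<theta> j \<in> {\<theta>0..T}"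
    have "\<forall>j\<in>I. (\<theta>(i := \<theta>0)) j \<in> {t..T}" using \<theta>0 h\<theta> by force
    moreover have "L2 t T (concat_at \<theta>0 \<alpha> \<beta>)" using L2_concat[OF L Lb] \<theta>0 by auto
    ultimately have "V I t x \<le> cost I t x (concat_at \<theta>0 \<alpha> \<beta>) (\<theta>(i := \<theta>0))"
      by (intro V_le_cost)
    also have "\<dots> = C + cost (I - {i}) \<theta>0 (Yf t x \<alpha> \<theta>0) \<beta> \<theta>"
      unfolding C_def by (rule cost_split[OF fin iI remove_nonempty[OF c1 iI] tx L \<theta>0 Lb h\<theta>])
    finally show "V I t x - C \<le> cost (I - {i}) \<theta>0 (Yf t x \<alpha> \<theta>0) \<beta> \<theta>" by simp
  qed
  then show ?thesis unfolding C_def by simp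
qed

lemma part1_multi:
  assumes fin: "finite I" and c1: "card I \<noteq> 1" and ne: "I \<noteq> {}"
    and tx: "t \<in> {0..T}" "x \<in> closure Dom"
  shows "V I t x = vphi T Dom \<gamma> b \<sigma> (PHI I) t x"
proof (rule antisym)
  show "V I t x \<le> vphi T Dom \<gamma> b \<sigma> (PHI I) t x"
  proof (rule vphi_greatest)
    fix \<alpha> :: "real \<Rightarrow> real^'m" and \<theta>0 assume L: "L2 t T \<alpha>" and \<theta>0: "\<theta>0 \<in> {t..T}"
    let ?y0 = "Yf t x \<alpha> \<theta>0"
    have "PHI I (\<theta>0, ?y0) \<in> (\<lambda>i. A * indicator (BB i) (\<theta>0, ?y0) + V (I - {i}) \<theta>0 ?y0) ` I"
      unfolding PHI_multi[OF c1] using fin ne by (intro Min_in) auto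
    then obtain i where "i \<in> I" "PHI I (\<theta>0, ?y0) = A * indicator (BB i) (\<theta>0, ?y0) + V (I - {i}) \<theta>0 ?y0"
      by blast
    then show "V I t x \<le> energy \<alpha> t \<theta>0 + PHI I (\<theta>0, ?y0)"
      using V_le_branch[OF fin c1 _ tx L \<theta>0] by (simp add: add.assoc)
  qed (use tx in simp)
  show "vphi T Dom \<gamma> b \<sigma> (PHI I) t x \<le> V I t x"
  proof (rule V_greatest)
    fix \<alpha> :: "real \<Rightarrow> real^'m" and \<theta> assume L: "L2 t T \<alpha>" and h\<theta>: "\<forall>j\<in>I. \<theta> j \<in> {t..T}"
    txt \<open>Stop first at the earliest time \<theta>0 = \<theta> i and continue with the same control.\<close>
    have "Min (\<theta> ` I) \<in> \<theta> ` I" using fin ne by (intro Min_in) auto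
    then obtain i where iI: "i \<in> I" and imin: "\<theta> i = Min (\<theta> ` I)" by auto
    define \<theta>0 where "\<theta>0 = \<theta> i"
    let ?y0 = "Yf t x \<alpha> \<theta>0"
    have \<theta>0: "\<theta>0 \<in> {t..T}" using h\<theta> iI by (simp add: \<theta>0_def)
    have later: "\<forall>j\<in>I - {i}. \<theta> j \<in> {\<theta>0..T}" unfolding \<theta>0_def imin using fin h\<theta> by auto
    have "vphi T Dom \<gamma> b \<sigma> (PHI I) t x \<le> energy \<alpha> t \<theta>0 + PHI I (\<theta>0, ?y0)"
      by (rule vphi_le[OF fin ne L \<theta>0])
    also have "PHI I (\<theta>0, ?y0) \<le> A * indicator (BB i) (\<theta>0, ?y0) + V (I - {i}) \<theta>0 ?y0"
      unfolding PHI_multi[OF c1] using fin iI by (intro Min_le) auto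
    also have "V (I - {i}) \<theta>0 ?y0 \<le> cost (I - {i}) \<theta>0 ?y0 \<alpha> \<theta>"
      by (rule V_le_cost[OF L2_mono[OF L]]) (use \<theta>0 later in auto)
    also have "energy \<alpha> t \<theta>0 + (A * indicator (BB i) (\<theta>0, ?y0) + cost (I - {i}) \<theta>0 ?y0 \<alpha> \<theta>) =
        cost I t x (concat_at \<theta>0 \<alpha> \<alpha>) (\<theta>(i := \<theta>0))"
      using cost_split[OF fin iI remove_nonempty[OF c1 iI] tx L \<theta>0 L2_mono[OF L] later] \<theta>0 by simp
    also have "\<dots> = cost I t x \<alpha> \<theta>" by (simp add: \<theta>0_def)
    finally show "vphi T Dom \<gamma> b \<sigma> (PHI I) t x \<le> cost I t x \<alpha> \<theta>" by simp
  qed (use tx in simp)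
qed

lemma exit_from_ball:
  assumes tx: "t \<in> {0..T}" "x \<in> closure Dom" and L: "L2 t T \<alpha>" and s0: "s0 \<in> {t..T}"
    and out: "(s0, Yf t x \<alpha> s0) \<notin> BB j"
  shows "r j \<le> Sup ((\<lambda>s. norm (Yf t x \<alpha> s - g j s)) ` {t..T})"
proof -
  have "Yf t x \<alpha> s0 \<in> closure Dom" using Yf_props(2)[OF tx L] s0 by auto
  then have "r j \<le> norm (Yf t x \<alpha> s0 - g j s0)"
    using out s0 tx unfolding ball_set_def by auto
  also have "\<dots> \<le> Sup ((\<lambda>s. norm (Yf t x \<alpha> s - g j s)) ` {t..T})"
  proof (rule cSup_upper)
    show "norm (Yf t x \<alpha> s0 - g j s0) \<in> (\<lambda>s. norm (Yf t x \<alpha> s - g j s)) ` {t..T}"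
      using s0 by auto
    have "continuous_on {t..T} (g j)" using g_cont[of j] tx by (auto intro: continuous_on_subset)
    then have "continuous_on {t..T} (\<lambda>s. norm (Yf t x \<alpha> s - g j s))"
      by (intro continuous_intros Yf_props(1)[OF tx L])
    then show "bdd_above ((\<lambda>s. norm (Yf t x \<alpha> s - g j s)) ` {t..T})"
      by (intro bounded_imp_bdd_above compact_imp_bounded compact_continuous_image compact_Icc)
  qed
  finally show ?thesis .
qed

text \<open>Every cost is at least A \<and> \<Lambda>: either some ball is hit at its time, or the
  control switched off after max \<theta> exits all balls with the same energy.\<close>
lemma cost_ge_min_A_Lambda:
  assumes fin: "finite I" and ne: "I \<noteq> {}" and tx: "t \<in> {0..T}" "x \<in> closure Dom"
    and L: "L2 t T \<alpha>" and h\<theta>: "\<forall>j\<in>I. \<theta> j \<in> {t..T}"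
  shows "min (ereal A) (Lambda T Dom \<gamma> b \<sigma> g r I t x) \<le> ereal (cost I t x \<alpha> \<theta>)"
proof (cases "\<exists>j\<in>I. (\<theta> j, Yf t x \<alpha> (\<theta> j)) \<in> BB j")
  case True
  then obtain j where j: "j \<in> I" "(\<theta> j, Yf t x \<alpha> (\<theta> j)) \<in> BB j" by blast
  have "A = A * indicator (BB j) (\<theta> j, Yf t x \<alpha> (\<theta> j))" using j by simp
  also have "\<dots> \<le> (\<Sum>i\<in>I. A * indicator (BB i) (\<theta> i, Yf t x \<alpha> (\<theta> i)))"
    by (rule member_le_sum[OF j(1)]) (use A_pos fin in auto)
  also have "\<dots> \<le> cost I t x \<alpha> \<theta>" unfolding cost_def using energy_nonneg by simp
  finally show ?thesis by (simp add: min.coboundedI1)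
next
  case False
  define M where "M = Max (\<theta> ` I)"
  define \<alpha>' where "\<alpha>' = concat_at M \<alpha> (\<lambda>_. 0::real^'m)"
  have t0: "0 \<le> t" using tx by simp
  have M: "M \<in> {t..T}" unfolding M_def by (rule Max_image_in) (use fin ne h\<theta> in auto)
  have "(\<Sum>i\<in>I. A * indicator (BB i) (\<theta> i, Yf t x \<alpha> (\<theta> i))) = 0"
    using False by (intro sum.neutral) auto
  then have "cost I t x \<alpha> \<theta> = energy \<alpha> t M" unfolding cost_def M_def by simp
  also have "\<dots> = energy \<alpha>' t T" unfolding \<alpha>'_def by (rule energy_switched_off[OF L, symmetric]) (use M in auto)
  finally have cost: "cost I t x \<alpha> \<theta> = energy \<alpha>' t T" .
  have L': "L2 t T \<alpha>'" unfolding \<alpha>'_def by (rule L2_concat[OF L L2_zero]) (use M in auto)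
  have "r j \<le> Sup ((\<lambda>s. norm (Yf t x \<alpha>' s - g j s)) ` {t..T})" if j: "j \<in> I" for j
  proof (rule exit_from_ball[OF tx L'])
    have "\<theta> j \<in> {t..M}" unfolding M_def using fin j h\<theta> by (auto intro: Max_ge)
    moreover from this have "Yf t x \<alpha>' (\<theta> j) = Yf t x \<alpha> (\<theta> j)"
      unfolding \<alpha>'_def by (intro Yf_concat_early[OF t0 _ _ tx(2) L L2_zero]) (use M in auto)
    ultimately show "\<theta> j \<in> {t..T}" "(\<theta> j, Yf t x \<alpha>' (\<theta> j)) \<notin> BB j" using False j M by auto
  qed
  then have "Lambda T Dom \<gamma> b \<sigma> g r I t x \<le> ereal (energy \<alpha>' t T)"
    unfolding Lambda_def by (intro Inf_lower) (use L' in blast)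
  then show ?thesis unfolding cost by (simp add: min.coboundedI2)
qed

lemma part2:
  assumes fin: "finite I" and ne: "I \<noteq> {}" and tx: "t \<in> {0..T}" "x \<in> closure Dom"
  shows "min (ereal A) (Lambda T Dom \<gamma> b \<sigma> g r I t x) \<le> ereal (V I t x)"
proof -
  define m where "m = min (ereal A) (Lambda T Dom \<gamma> b \<sigma> g r I t x)"
  have "m \<le> ereal A" unfolding m_def by simp
  then obtain c where c: "m = ereal c \<or> m = -\<infinity>" by (cases m) auto
  have "c \<le> V I t x" if "m = ereal c"
    using that cost_ge_min_A_Lambda[OF fin ne tx] tx unfolding m_def[symmetric]
    by (intro V_greatest) auto
  then show ?thesis using c unfolding m_def[symmetric] by auto
qed

end

theorem mainTheorem6:
  fixes T :: real and Dom :: "(real^'d) set" and n \<gamma> :: "real^'d \<Rightarrow> real^'d"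
    and b :: "real \<Rightarrow> real^'d \<Rightarrow> real^'d" and \<sigma> :: "real \<Rightarrow> real^'d \<Rightarrow> real^'m^'d"
    and g :: "nat \<Rightarrow> real \<Rightarrow> real^'d" and r :: "nat \<Rightarrow> real" and A :: real
  assumes std: "standing_assumptions T Dom n \<gamma> b \<sigma>"
    and wellposed: "reflected_solution_exists_unique T Dom \<gamma> b \<sigma>"
    and g: "\<And>i. continuous_on {0..T} (g i) \<and> g i ` {0..T} \<subseteq> closure Dom"
    and r: "\<And>i. r i > 0"
    and A: "A > 0"
  shows "\<forall>I t x. finite I \<and> I \<noteq> {} \<and> t \<in> {0..T} \<and> x \<in> closure Dom \<longrightarrow>
           vIA T Dom \<gamma> b \<sigma> g r I A t x = vphi T Dom \<gamma> b \<sigma> (phiIA T Dom \<gamma> b \<sigma> g r I A) t x \<and>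
           ereal (vIA T Dom \<gamma> b \<sigma> g r I A t x) \<ge> min (ereal A) (Lambda T Dom \<gamma> b \<sigma> g r I t x)"
proof (intro allI impI conjI)
  interpret value_functions T Dom n \<gamma> b \<sigma> g r A
    by unfold_locales (use std wellposed g A in auto)
  fix I :: "nat set" and t :: real and x :: "real^'d"
  assume "finite I \<and> I \<noteq> {} \<and> t \<in> {0..T} \<and> x \<in> closure Dom"
  then have fin: "finite I" and ne: "I \<noteq> {}" and tx: "t \<in> {0..T}" "x \<in> closure Dom" by auto
  show "V I t x = vphi T Dom \<gamma> b \<sigma> (PHI I) t x"
  proof (cases "card I = 1")
    case True
    then obtain i where "I = {i}" by (rule card_1_singletonE)
    then show ?thesis using part1_single[OF tx(1)] by simp
  qed (rule part1_multi[OF fin _ ne tx])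
  show "min (ereal A) (Lambda T Dom \<gamma> b \<sigma> g r I t x) \<le> ereal (V I t x)"
    by (rule part2[OF fin ne tx])
qed

end
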